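(* Let $c$ be an oriented geodesic of $\mathbb{H}^2$ whose tail and head both lie in the limit set $\Lambda_{\Gamma_o}$. Let $(\ell_m)_{m\in\mathbb{Z}}$ be the leaves of $\mathcal{L}$ crossed by $c$, indexed in the order in which $c$ crosses them and each oriented so that $c$ crosses it from its right side to its left side, and suppose the indexing is chosen so that $\ell_0=\gamma_0e_0$ for some $\gamma_0\in\Gamma_o$. Then for every integer $n$, the oriented leaf $\ell_{2n}$ lies in the $\Gamma_o$-orbit of $e_0$; moreover, if $\gamma_n$ denotes the unique element of $\Gamma_o$ with $\ell_{2n}=\gamma_ne_0$, then $\gamma_{n+1}=\gamma_nw$ for some $w$ in $$W=\{R_*IR_*I,\ R_*IR_*^2I,\ R_*^2IR_*^2I,\ R_*^2IR_*I\}.$$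
   Context: Work in the upper half-plane model of $\mathbb{H}^2$. Let $\Delta_0$ be the ideal triangle with vertices $0,1,\infty$, $e_0$ the geodesic oriented from $\infty$ to $0$, and $I$ the order-2 rotation $z\mapsto-1/z$ (whose center lies on $e_0$). Let $\Delta$ be a hyperideal triangle (a region bounded by three pairwise disjoint geodesics with no common ideal endpoints) containing $\Delta_0$, having $e_0$ as a side, and invariant under an order-3 rotation $R_*$ that permutes its sides clockwise, chosen so that the orthogonal projection of the center of $R_*$ onto $e_0$ is the fixed point of $I$. Let $\Gamma=\langle I,R_*\rangle$ (a convex cocompact group isomorphic to $\mathrm{PSL}(2,\mathbb{Z})$), $\Gamma_o=\langle R_*,IR_*I\rangle$ its index-2 subgroup, and $\mathcal{L}$ the lamination formed by the $\Gamma$-images of the sides of $\Delta$; its leaves are geodesics, and $\Gamma_o$ acts simply transitively on unoriented leaves. Oriented leaves: the sides $R_*e_0$, $R_*^2e_0$ carry the orientations of the images of $e_0$. For an oriented geodesic, its left side is the half-plane on its left. *)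

theory Defs
  imports "HOL-Analysis.Analysis"
begin

text \<open>Points of the boundary circle of the upper half-plane: \<infinity> or a real number.\<close>
datatype bpt = Inf | Fin real

text \<open>Oriented geodesics are given by (tail, head) of distinct ideal endpoints.\<close>
type_synonym ogeod = "bpt \<times> bpt"

definition mat2 :: "real \<Rightarrow> real \<Rightarrow> real \<Rightarrow> real \<Rightarrow> real^2^2" where
  "mat2 a b c d = vector [vector [a, b], vector [c, d]]"

text \<open>Inverse of a matrix of determinant 1 (adjugate).\<close>
definition inv2 :: "real^2^2 \<Rightarrow> real^2^2" where
  "inv2 M = mat2 (M$2$2) (- (M$1$2)) (- (M$2$1)) (M$1$1)"

text \<open>Equality in PSL(2,R).\<close>
definition psl_eq :: "real^2^2 \<Rightarrow> real^2^2 \<Rightarrow> bool" where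
  "psl_eq M N \<longleftrightarrow> M = N \<or> M = - N"

definition moeb :: "real^2^2 \<Rightarrow> complex \<Rightarrow> complex" where
  "moeb M z = (of_real (M$1$1) * z + of_real (M$1$2)) / (of_real (M$2$1) * z + of_real (M$2$2))"

definition bact :: "real^2^2 \<Rightarrow> bpt \<Rightarrow> bpt" where
  "bact M \<xi> = (case \<xi> of
      Inf \<Rightarrow> (if M$2$1 \<noteq> 0 then Fin (M$1$1 / M$2$1) else Inf)
    | Fin x \<Rightarrow> (if M$2$1 * x + M$2$2 \<noteq> 0
                then Fin ((M$1$1 * x + M$1$2) / (M$2$1 * x + M$2$2)) else Inf))"

definition gact :: "real^2^2 \<Rightarrow> ogeod \<Rightarrow> ogeod" where
  "gact M g = (bact M (fst g), bact M (snd g))"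

text \<open>Subgroup of SL(2,R) generated by a set S (S is assumed closed under inverses).\<close>
inductive_set gen_group :: "(real^2^2) set \<Rightarrow> (real^2^2) set" for S where
  one: "mat 1 \<in> gen_group S"
| step: "s \<in> S \<Longrightarrow> M \<in> gen_group S \<Longrightarrow> s ** M \<in> gen_group S"

definition geod :: "ogeod \<Rightarrow> complex set" where
  "geod g = {z. Im z > 0 \<and> (case g of
      (Fin t, Fin h) \<Rightarrow> t \<noteq> h \<and> cmod (z - of_real ((t + h) / 2)) = \<bar>t - h\<bar> / 2
    | (Inf, Fin x) \<Rightarrow> Re z = x
    | (Fin x, Inf) \<Rightarrow> Re z = x
    | _ \<Rightarrow> False)}"

definition lside :: "ogeod \<Rightarrow> complex set" where
  "lside g = {z. Im z > 0 \<and> (case g of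
      (Fin t, Fin h) \<Rightarrow> t \<noteq> h \<and> (h - t) * Re ((z - of_real t) / (z - of_real h)) > 0
    | (Inf, Fin x) \<Rightarrow> Re z > x
    | (Fin x, Inf) \<Rightarrow> Re z < x
    | _ \<Rightarrow> False)}"

definition cl_lside :: "ogeod \<Rightarrow> complex set" where
  "cl_lside g = lside g \<union> geod g"

definition bleft :: "ogeod \<Rightarrow> bpt \<Rightarrow> bool" where
  "bleft g \<xi> = (case g of
      (Fin t, Fin h) \<Rightarrow> t \<noteq> h \<and> (case \<xi> of Inf \<Rightarrow> h > t | Fin y \<Rightarrow> (h - t) * ((y - t) / (y - h)) > 0)
    | (Inf, Fin x) \<Rightarrow> (case \<xi> of Fin y \<Rightarrow> y > x | Inf \<Rightarrow> False)
    | (Fin x, Inf) \<Rightarrow> (case \<xi> of Fin y \<Rightarrow> y < x | Inf \<Rightarrow> False)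
    | _ \<Rightarrow> False)"

definition crosses_RL :: "ogeod \<Rightarrow> ogeod \<Rightarrow> bool" where
  "crosses_RL c l \<longleftrightarrow> bleft l (snd c) \<and> bleft (snd l, fst l) (fst c)"

text \<open>A parameter increasing strictly along c from its tail to its head
  (modulus of the normalising Moebius map sending tail to 0, head to \<infinity>).\<close>
definition pos :: "ogeod \<Rightarrow> complex \<Rightarrow> real" where
  "pos c z = (case c of
      (Fin t, Fin h) \<Rightarrow> cmod (z - of_real t) / cmod (z - of_real h)
    | (Inf, Fin h) \<Rightarrow> 1 / cmod (z - of_real h)
    | (Fin t, Inf) \<Rightarrow> cmod (z - of_real t)
    | _ \<Rightarrow> 0)"

definition hdist :: "complex \<Rightarrow> complex \<Rightarrow> real" where
  "hdist z w = arcosh (1 + (cmod (z - w))\<^sup>2 / (2 * Im z * Im w))"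

definition disjoint_geods :: "ogeod \<Rightarrow> ogeod \<Rightarrow> bool" where
  "disjoint_geods g1 g2 \<longleftrightarrow> geod g1 \<inter> geod g2 = {} \<and> {fst g1, snd g1} \<inter> {fst g2, snd g2} = {}"

definition Imat :: "real^2^2" where "Imat = mat2 0 (-1) 1 0"

definition e0 :: ogeod where "e0 = (Inf, Fin 0)"

text \<open>The ideal triangle with vertices 0, 1, \<infinity> (closed, in H^2).\<close>
definition Delta0 :: "complex set" where
  "Delta0 = {z. Im z > 0 \<and> 0 \<le> Re z \<and> Re z \<le> 1 \<and> cmod (z - 1/2) \<ge> 1/2}"

definition side1 :: "real^2^2 \<Rightarrow> ogeod" where "side1 R = gact R e0"
definition side2 :: "real^2^2 \<Rightarrow> ogeod" where "side2 R = gact (R ** R) e0"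

definition Delta :: "real^2^2 \<Rightarrow> complex set" where
  "Delta R = {z. Im z > 0} \<inter> cl_lside e0 \<inter> cl_lside (side1 R) \<inter> cl_lside (side2 R)"

text \<open>R is an admissible choice of R_*: clockwise rotation by 2 pi / 3 about a
  centre whose orthogonal projection to e_0 is i, with Delta a hyperideal triangle
  containing Delta_0 and invariant under R.\<close>
definition admissible_R :: "real^2^2 \<Rightarrow> bool" where
  "admissible_R R \<longleftrightarrow> det R = 1
    \<and> (\<exists>p. Im p > 0 \<and> moeb R p = p
          \<and> (moeb R has_field_derivative cis (- 2 * pi / 3)) (at p)
          \<and> (\<forall>y>0. y \<noteq> 1 \<longrightarrow> hdist p \<i> < hdist p (\<i> * of_real y)))
    \<and> disjoint_geods e0 (side1 R) \<and> disjoint_geods e0 (side2 R)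
    \<and> disjoint_geods (side1 R) (side2 R)
    \<and> Delta0 \<subseteq> Delta R
    \<and> moeb R ` Delta R = Delta R"

definition Gamma :: "real^2^2 \<Rightarrow> (real^2^2) set" where
  "Gamma R = gen_group {Imat, inv2 Imat, R, inv2 R}"

definition Gamma_o :: "real^2^2 \<Rightarrow> (real^2^2) set" where
  "Gamma_o R = gen_group {R, inv2 R, Imat ** R ** Imat, inv2 (Imat ** R ** Imat)}"

definition oleaves :: "real^2^2 \<Rightarrow> ogeod set" where
  "oleaves R = {gact g s | g s. g \<in> Gamma R \<and> s \<in> {e0, side1 R, side2 R}}
             \<union> {prod.swap (gact g s) | g s. g \<in> Gamma R \<and> s \<in> {e0, side1 R, side2 R}}"

definition limset :: "(real^2^2) set \<Rightarrow> bpt set" where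
  "limset G = {\<xi>. case \<xi> of
      Fin x \<Rightarrow> of_real x \<in> closure ((\<lambda>g. moeb g \<i>) ` G)
    | Inf \<Rightarrow> \<not> bounded ((\<lambda>g. moeb g \<i>) ` G)}"

definition Wset :: "real^2^2 \<Rightarrow> (real^2^2) set" where
  "Wset R = {R ** Imat ** R ** Imat, R ** Imat ** (R ** R) ** Imat,
             (R ** R) ** Imat ** (R ** R) ** Imat, (R ** R) ** Imat ** R ** Imat}"

end

theory Submission
  imports Defs
begin

(* Boundary points are treated in homogeneous coordinates: that an ideal point lies on the left
   of an oriented geodesic is the sign of a product of three 2x2 determinants, hence invariant
   under SL(2,R), and a geodesic and its two sides in the upper half-plane are the zero set and
   the sign sets of a real quadratic form.

   The Gamma-translates of e0 form a tree: each one is a side of Delta or lies beyond one of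
   the sides.  Hence the stabiliser of e0 in Gamma is {1, -1}, and if c crosses gamma e0 then the
   next leaf it crosses is gamma applied to the reversal of R e0 or R^2 e0, that is gamma R I e0
   or gamma R^2 I e0.  Two such steps multiply gamma by an element of W, and W lies in Gamma_o,
   which contains -1. *)

lemma matrix_mult_2_nth: "(A ** B)$i$j = A$i$1 * B$1$j + A$i$2 * B$2$j"
  for A B :: "real^2^2"
  by (simp add: matrix_matrix_mult_def sum_2)

lemma mat2_nth [simp]:
  "(mat2 a b c d)$1$1 = a" "(mat2 a b c d)$1$2 = b" "(mat2 a b c d)$2$1 = c" "(mat2 a b c d)$2$2 = d"
  by (simp_all add: mat2_def)

lemma mat_1_2_nth [simp]:
  "(mat 1 :: real^2^2)$1$1 = 1" "(mat 1 :: real^2^2)$1$2 = 0"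
  "(mat 1 :: real^2^2)$2$1 = 0" "(mat 1 :: real^2^2)$2$2 = 1"
  by (simp_all add: mat_def)

lemma inv2_nth [simp]:
  "(inv2 M)$1$1 = M$2$2" "(inv2 M)$1$2 = - M$1$2" "(inv2 M)$2$1 = - M$2$1" "(inv2 M)$2$2 = M$1$1"
  by (simp_all add: inv2_def)

lemma matrix2_eq_iff:
  "M = N \<longleftrightarrow> M$1$1 = N$1$1 \<and> M$1$2 = N$1$2 \<and> M$2$1 = N$2$1 \<and> M$2$2 = N$2$2"
  for M N :: "real^2^2"
  by (auto simp: vec_eq_iff forall_2)

lemma matrix_mult_uminus: "(- A) ** B = - (A ** B)" "A ** (- B) = - (A ** B)"
  for A B :: "real^2^2"
  by (simp_all add: matrix2_eq_iff matrix_mult_2_nth)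

lemma inv2_matrix_mult: "inv2 (A ** B) = inv2 B ** inv2 A"
  by (simp add: matrix2_eq_iff matrix_mult_2_nth algebra_simps)

lemma inv2_inv2 [simp]: "inv2 (inv2 A) = A"
  by (simp add: matrix2_eq_iff)

lemma inv2_mat_1 [simp]: "inv2 (mat 1) = mat 1"
  by (simp add: matrix2_eq_iff)

lemma det_inv2: "det (inv2 M) = det M"
  by (simp add: det_2 algebra_simps)

lemma matrix_mult_inv2: "det M = 1 \<Longrightarrow> M ** inv2 M = mat 1"
  and inv2_matrix_mult_self: "det M = 1 \<Longrightarrow> inv2 M ** M = mat 1"
  by (simp_all add: matrix2_eq_iff matrix_mult_2_nth det_2 algebra_simps)

section \<open>Homogeneous coordinates on the boundary\<close>

type_synonym hvec = "real \<times> real"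

fun hcoord :: "bpt \<Rightarrow> hvec" where
  "hcoord Inf = (1, 0)"
| "hcoord (Fin x) = (x, 1)"

fun bpt_of :: "hvec \<Rightarrow> bpt" where
  "bpt_of (x, y) = (if y \<noteq> 0 then Fin (x / y) else Inf)"

fun wedge :: "hvec \<Rightarrow> hvec \<Rightarrow> real" where
  "wedge (a, b) (c, d) = a * d - b * c"

definition hmul :: "real^2^2 \<Rightarrow> hvec \<Rightarrow> hvec" where
  "hmul M u = (M$1$1 * fst u + M$1$2 * snd u, M$2$1 * fst u + M$2$2 * snd u)"

lemma bact_eq_bpt_of_hmul: "bact M \<xi> = bpt_of (hmul M (hcoord \<xi>))"
  by (cases \<xi>) (auto simp: bact_def hmul_def)

lemma bpt_of_scaleR: "k \<noteq> 0 \<Longrightarrow> bpt_of (k *\<^sub>R u) = bpt_of u"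
  by (cases u) auto

lemma bpt_of_hcoord [simp]: "bpt_of (hcoord \<xi>) = \<xi>"
  by (cases \<xi>) auto

lemma hcoord_nonzero [simp]: "hcoord \<xi> \<noteq> 0"
  by (cases \<xi>) (auto simp: zero_prod_def)

lemma hcoord_bpt_of: "u \<noteq> 0 \<Longrightarrow> \<exists>k. k \<noteq> 0 \<and> hcoord (bpt_of u) = k *\<^sub>R u"
proof (cases u)
  case (Pair x y)
  assume "u \<noteq> 0"
  show ?thesis
  proof (cases "y = 0")
    case True
    then have "x \<noteq> 0" using \<open>u \<noteq> 0\<close> Pair by (auto simp: zero_prod_def)
    then show ?thesis using True Pair by (intro exI[of _ "1/x"]) auto
  next
    case False
    then show ?thesis using Pair by (intro exI[of _ "1/y"]) auto
  qed
qed

lemma wedge_hcoord_eq_0_iff: "wedge (hcoord \<xi>) (hcoord \<eta>) = 0 \<longleftrightarrow> \<xi> = \<eta>"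
  by (cases \<xi>; cases \<eta>) auto

lemma wedge_antisym: "wedge u v = - wedge v u"
  by (cases u; cases v) simp

lemma wedge_scaleR: "wedge (a *\<^sub>R u) (b *\<^sub>R v) = a * b * wedge u v"
  by (cases u; cases v) (simp add: algebra_simps)

lemma hmul_matrix_mult: "hmul (A ** B) u = hmul A (hmul B u)"
  by (simp add: hmul_def matrix_mult_2_nth algebra_simps)

lemma hmul_scaleR: "hmul M (k *\<^sub>R u) = k *\<^sub>R hmul M u"
  by (cases u) (simp add: hmul_def algebra_simps)

lemma wedge_hmul: "wedge (hmul M u) (hmul M v) = det M * wedge u v"
  by (cases u; cases v) (simp add: hmul_def det_2 algebra_simps)

lemma hmul_nonzero:
  assumes "det M \<noteq> 0" "u \<noteq> 0"
  shows "hmul M u \<noteq> 0"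
proof
  assume "hmul M u = 0"
  then have "wedge (hmul M u) (hmul M (snd u, - fst u)) = 0"
    by (cases "hmul M (snd u, - fst u)") (simp add: zero_prod_def)
  moreover have "wedge u (snd u, - fst u) = - ((fst u)\<^sup>2 + (snd u)\<^sup>2)"
    by (cases u) (simp add: power2_eq_square)
  moreover have "(fst u)\<^sup>2 + (snd u)\<^sup>2 \<noteq> 0"
    using \<open>u \<noteq> 0\<close> by (cases u) (simp add: zero_prod_def)
  ultimately show False using assms(1) by (simp add: wedge_hmul)
qed

lemma hcoord_bact: "det M \<noteq> 0 \<Longrightarrow> \<exists>k. k \<noteq> 0 \<and> hcoord (bact M \<xi>) = k *\<^sub>R hmul M (hcoord \<xi>)"
  unfolding bact_eq_bpt_of_hmul by (rule hcoord_bpt_of, rule hmul_nonzero) auto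

lemma bact_matrix_mult: "det B \<noteq> 0 \<Longrightarrow> bact (A ** B) \<xi> = bact A (bact B \<xi>)"
proof -
  assume "det B \<noteq> 0"
  then obtain k where k: "k \<noteq> 0" "hcoord (bact B \<xi>) = k *\<^sub>R hmul B (hcoord \<xi>)"
    using hcoord_bact by blast
  show ?thesis
    unfolding bact_eq_bpt_of_hmul[of A] k(2) hmul_scaleR bpt_of_scaleR[OF k(1)]
    by (simp add: bact_eq_bpt_of_hmul hmul_matrix_mult)
qed

lemma bact_uminus: "bact (- M) \<xi> = bact M \<xi>"
proof -
  have "hmul (- M) u = (-1) *\<^sub>R hmul M u" for u by (simp add: hmul_def)
  then show ?thesis by (metis bact_eq_bpt_of_hmul bpt_of_scaleR neg_equal_0_iff_equal one_neq_zero)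
qed

lemma bact_mat_1 [simp]: "bact (mat 1) \<xi> = \<xi>"
  by (cases \<xi>) (auto simp: bact_def)

lemma bact_inv2: "det M = 1 \<Longrightarrow> bact M (bact (inv2 M) \<xi>) = \<xi>"
  and bact_inv2': "det M = 1 \<Longrightarrow> bact (inv2 M) (bact M \<xi>) = \<xi>"
  by (metis bact_matrix_mult bact_mat_1 det_inv2 matrix_mult_inv2 inv2_matrix_mult_self zero_neq_one)+

lemma gact_swap: "gact M (prod.swap g) = prod.swap (gact M g)"
  by (simp add: gact_def)

lemma fst_gact: "fst (gact M g) = bact M (fst g)" and snd_gact: "snd (gact M g) = bact M (snd g)"
  by (simp_all add: gact_def)

lemma gact_matrix_mult: "det B \<noteq> 0 \<Longrightarrow> gact (A ** B) g = gact A (gact B g)"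
  by (simp add: gact_def bact_matrix_mult)

lemma gact_uminus: "gact (- M) g = gact M g"
  by (simp add: gact_def bact_uminus)

lemma gact_mat_1 [simp]: "gact (mat 1) g = g"
  by (simp add: gact_def)

lemma gact_inv2: "det M = 1 \<Longrightarrow> gact M (gact (inv2 M) g) = g"
  and gact_inv2': "det M = 1 \<Longrightarrow> gact (inv2 M) (gact M g) = g"
  by (simp_all add: gact_def bact_inv2 bact_inv2')


definition hleft :: "hvec \<Rightarrow> hvec \<Rightarrow> hvec \<Rightarrow> bool" where
  "hleft u v w \<longleftrightarrow> wedge v u * wedge u w * wedge v w > 0"

lemma bleft_iff_hleft: "bleft g \<xi> \<longleftrightarrow> hleft (hcoord (fst g)) (hcoord (snd g)) (hcoord \<xi>)"
proof -
  have sign: "(h - t) * (y - t) / (y - h) > 0 \<longleftrightarrow> (h - t) * (t - y) * (h - y) > 0" for t h y :: real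
  proof (cases "y = h")
    case False
    have "(h - t) * (t - y) * (h - y) = ((h - t) * (y - t)) * (y - h)" by (simp add: algebra_simps)
    then have "((h - t) * (t - y) * (h - y)) / (y - h)\<^sup>2
        = (((h - t) * (y - t)) * (y - h)) / ((y - h) * (y - h))"
      by (simp only: power2_eq_square)
    also have "\<dots> = (h - t) * (y - t) / (y - h)"
      using False by (intro mult_divide_mult_cancel_right) simp
    finally have "(h - t) * (y - t) / (y - h) = ((h - t) * (t - y) * (h - y)) / (y - h)\<^sup>2" ..
    moreover have "(y - h)\<^sup>2 > 0" using False by simp
    ultimately show ?thesis by (simp add: zero_less_divide_iff)
  qed simp
  obtain a b where g: "g = (a, b)" by (cases g)
  show ?thesis
    unfolding g hleft_def by (cases a; cases b; cases \<xi>) (auto simp: bleft_def sign)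
qed

lemma hleft_scaleR:
  "a \<noteq> 0 \<Longrightarrow> b \<noteq> 0 \<Longrightarrow> c \<noteq> 0 \<Longrightarrow> hleft (a *\<^sub>R u) (b *\<^sub>R v) (c *\<^sub>R w) = hleft u v w"
proof -
  assume "a \<noteq> 0" "b \<noteq> 0" "c \<noteq> 0"
  then have "(a * b * c)\<^sup>2 > 0" by simp
  moreover have "wedge (b *\<^sub>R v) (a *\<^sub>R u) * wedge (a *\<^sub>R u) (c *\<^sub>R w) * wedge (b *\<^sub>R v) (c *\<^sub>R w)
      = (a * b * c)\<^sup>2 * (wedge v u * wedge u w * wedge v w)"
    by (simp add: wedge_scaleR power2_eq_square algebra_simps)
  ultimately show ?thesis unfolding hleft_def by (simp add: zero_less_mult_iff)
qed

lemma hleft_hmul: "det M > 0 \<Longrightarrow> hleft (hmul M u) (hmul M v) (hmul M w) = hleft u v w"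
proof -
  assume "det M > 0"
  then have "det M ^ 3 > 0" by simp
  moreover have "wedge (hmul M v) (hmul M u) * wedge (hmul M u) (hmul M w) * wedge (hmul M v) (hmul M w)
      = det M ^ 3 * (wedge v u * wedge u w * wedge v w)"
    by (simp add: wedge_hmul power3_eq_cube algebra_simps)
  ultimately show ?thesis unfolding hleft_def by (simp add: zero_less_mult_iff)
qed

lemma bleft_gact: "det M > 0 \<Longrightarrow> bleft (gact M g) (bact M \<xi>) = bleft g \<xi>"
proof -
  assume d: "det M > 0"
  then have d0: "det M \<noteq> 0" by simp
  obtain k1 where k1: "k1 \<noteq> 0" "hcoord (bact M (fst g)) = k1 *\<^sub>R hmul M (hcoord (fst g))"
    using hcoord_bact[OF d0] by blast
  obtain k2 where k2: "k2 \<noteq> 0" "hcoord (bact M (snd g)) = k2 *\<^sub>R hmul M (hcoord (snd g))"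
    using hcoord_bact[OF d0] by blast
  obtain k3 where k3: "k3 \<noteq> 0" "hcoord (bact M \<xi>) = k3 *\<^sub>R hmul M (hcoord \<xi>)"
    using hcoord_bact[OF d0] by blast
  show ?thesis
    unfolding bleft_iff_hleft fst_gact snd_gact k1(2) k2(2) k3(2)
      hleft_scaleR[OF k1(1) k2(1) k3(1)] hleft_hmul[OF d] ..
qed

lemma bleft_gact_iff: "det M = 1 \<Longrightarrow> bleft (gact M g) \<xi> \<longleftrightarrow> bleft g (bact (inv2 M) \<xi>)"
  by (metis bact_inv2 bleft_gact zero_less_one)

lemma bleft_imp_not_bleft_swap: "bleft g \<xi> \<Longrightarrow> \<not> bleft (prod.swap g) \<xi>"
proof
  assume a: "bleft g \<xi>" and b: "bleft (prod.swap g) \<xi>"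
  let ?u = "hcoord (fst g)" and ?v = "hcoord (snd g)" and ?w = "hcoord \<xi>"
  have "wedge ?v ?u * wedge ?u ?w * wedge ?v ?w > 0" using a by (simp add: bleft_iff_hleft hleft_def)
  moreover have "wedge ?u ?v * wedge ?v ?w * wedge ?u ?w > 0" using b by (simp add: bleft_iff_hleft hleft_def)
  ultimately show False using wedge_antisym[of ?u ?v] by (simp add: algebra_simps)
qed

lemma bleft_e0_Fin: "bleft e0 (Fin y) \<longleftrightarrow> y > 0" "bleft (prod.swap e0) (Fin y) \<longleftrightarrow> y < 0"
  by (simp_all add: bleft_def e0_def)

lemma bleft_increasing:
  assumes "t < h"
  shows "bleft (Fin t, Fin h) (Fin y) \<longleftrightarrow> y < t \<or> h < y"
    and "bleft (Fin h, Fin t) (Fin y) \<longleftrightarrow> t < y \<and> y < h"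
    and "bleft (Fin t, Fin h) Inf" and "\<not> bleft (Fin h, Fin t) Inf"
proof -
  have fin: "bleft (Fin a, Fin b) (Fin y) \<longleftrightarrow> a \<noteq> b \<and> (b - a) * (a - y) * (b - y) > 0" for a b
    using bleft_iff_hleft[of "(Fin a, Fin b)" "Fin y"] by (auto simp: hleft_def)
  have hp: "h - t > 0" using assms by simp
  have "(h - t) * (t - y) * (h - y) > 0 \<longleftrightarrow> (t - y) * (h - y) > 0"
    using hp by (simp add: mult.assoc zero_less_mult_iff)
  also have "\<dots> \<longleftrightarrow> y < t \<or> h < y" using assms by (auto simp: zero_less_mult_iff)
  finally show "bleft (Fin t, Fin h) (Fin y) \<longleftrightarrow> y < t \<or> h < y" using assms by (simp add: fin)
  have "(t - h) * (h - y) * (t - y) > 0 \<longleftrightarrow> (h - y) * (t - y) < 0"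
    using hp by (simp add: mult.assoc mult_less_0_iff zero_less_mult_iff)
  also have "\<dots> \<longleftrightarrow> t < y \<and> y < h" using assms by (auto simp: mult_less_0_iff)
  finally show "bleft (Fin h, Fin t) (Fin y) \<longleftrightarrow> t < y \<and> y < h" using assms by (simp add: fin)
  show "bleft (Fin t, Fin h) Inf" "\<not> bleft (Fin h, Fin t) Inf" using assms by (simp_all add: bleft_def)
qed

section \<open>Geodesics and half-planes in the upper half-plane\<close>

text \<open>For finite endpoints t, h, geod_form is the power (t - Re z)(h - Re z) + (Im z)^2 of z
  with respect to the circle over [t, h]; in homogeneous form it also covers the vertical
  geodesics.\<close>

definition lin_form :: "hvec \<Rightarrow> complex \<Rightarrow> complex" where
  "lin_form u z = of_real (fst u) - of_real (snd u) * z"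

definition geod_form :: "hvec \<Rightarrow> hvec \<Rightarrow> complex \<Rightarrow> real" where
  "geod_form u v z = Re (lin_form u z * cnj (lin_form v z))"

definition side_form :: "hvec \<Rightarrow> hvec \<Rightarrow> complex \<Rightarrow> real" where
  "side_form u v z = wedge v u * geod_form u v z"

lemma geod_form_commute: "geod_form u v z = geod_form v u z"
  by (simp add: geod_form_def lin_form_def algebra_simps)

lemma geod_form_Fin: "geod_form (t, 1) (h, 1) z = (t - Re z) * (h - Re z) + (Im z)\<^sup>2"
  by (simp add: geod_form_def lin_form_def power2_eq_square algebra_simps)

lemma side_form_swap: "side_form v u z = - side_form u v z"
  by (simp add: side_form_def geod_form_commute[of v u] wedge_antisym[of u v])

lemma lin_form_scaleR: "lin_form (a *\<^sub>R u) z = of_real a * lin_form u z"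
  by (simp add: lin_form_def algebra_simps)

lemma geod_form_scaleR: "geod_form (a *\<^sub>R u) (b *\<^sub>R v) z = a * b * geod_form u v z"
  by (simp add: geod_form_def lin_form_scaleR algebra_simps)

lemma lin_form_nonzero: "Im z > 0 \<Longrightarrow> u \<noteq> 0 \<Longrightarrow> lin_form u z \<noteq> 0"
  by (cases u) (auto simp: lin_form_def complex_eq_iff zero_prod_def)

lemma lside_iff_side_form:
  "z \<in> lside g \<longleftrightarrow> Im z > 0 \<and> side_form (hcoord (fst g)) (hcoord (snd g)) z > 0"
proof -
  obtain a b where g: "g = (a, b)" by (cases g)
  show ?thesis
  proof (cases a; cases b)
    fix t h assume ab: "a = Fin t" "b = Fin h"
    show ?thesis
    proof (cases "Im z > 0")
      case True
      have "Re ((z - of_real t) / (z - of_real h))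
          = ((t - Re z) * (h - Re z) + (Im z)\<^sup>2) / ((Re z - h)\<^sup>2 + (Im z)\<^sup>2)"
        by (simp add: Re_divide power2_eq_square algebra_simps)
      moreover have "(Re z - h)\<^sup>2 + (Im z)\<^sup>2 > 0" using True by (simp add: add_nonneg_pos)
      ultimately have "(h - t) * Re ((z - of_real t) / (z - of_real h)) > 0
          \<longleftrightarrow> (h - t) * ((t - Re z) * (h - Re z) + (Im z)\<^sup>2) > 0"
        by (simp add: zero_less_mult_iff zero_less_divide_iff)
      then show ?thesis using True unfolding g ab
        by (auto simp: lside_def side_form_def geod_form_Fin)
    qed (auto simp: lside_def g ab)
  qed (auto simp: lside_def g side_form_def geod_form_def lin_form_def)
qed

lemma geod_iff_geod_form:
  "z \<in> geod g \<longleftrightarrow> Im z > 0 \<and> fst g \<noteq> snd g \<and> geod_form (hcoord (fst g)) (hcoord (snd g)) z = 0"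
proof -
  obtain a b where g: "g = (a, b)" by (cases g)
  show ?thesis
  proof (cases a; cases b)
    fix t h assume ab: "a = Fin t" "b = Fin h"
    have "cmod (z - of_real ((t + h) / 2)) = \<bar>t - h\<bar> / 2
        \<longleftrightarrow> (cmod (z - of_real ((t + h) / 2)))\<^sup>2 = (\<bar>t - h\<bar> / 2)\<^sup>2"
      by (rule power2_eq_iff_nonneg[symmetric]) auto
    also have "\<dots> \<longleftrightarrow> (t - Re z) * (h - Re z) + (Im z)\<^sup>2 = 0"
      unfolding cmod_power2 by (simp add: power2_eq_square field_simps) (auto simp: algebra_simps)
    finally show ?thesis unfolding g ab by (auto simp: geod_def geod_form_Fin)
  qed (auto simp: geod_def g geod_form_def lin_form_def)
qed

lemma geod_swap: "geod (prod.swap g) = geod g"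
  using geod_form_commute[of "hcoord (fst g)" "hcoord (snd g)"] by (auto simp: geod_iff_geod_form)

lemma geod_disjoint_lside: "z \<in> geod g \<Longrightarrow> z \<notin> lside g"
  by (auto simp: geod_iff_geod_form lside_iff_side_form side_form_def)

lemma lside_swap_iff: "z \<in> lside (prod.swap g) \<longleftrightarrow> Im z > 0 \<and> side_form (hcoord (fst g)) (hcoord (snd g)) z < 0"
  using side_form_swap[of "hcoord (snd g)" "hcoord (fst g)" z] by (auto simp: lside_iff_side_form)

lemma lside_swap_not_cl_lside: "z \<in> lside (prod.swap g) \<Longrightarrow> z \<notin> cl_lside g"
proof -
  assume "z \<in> lside (prod.swap g)"
  then have "side_form (hcoord (fst g)) (hcoord (snd g)) z < 0" by (simp add: lside_swap_iff)
  then show ?thesis by (auto simp: cl_lside_def lside_iff_side_form geod_iff_geod_form side_form_def)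
qed

text \<open>The linear form of any boundary point is a combination of those of p and q.\<close>
lemma geod_form_in_basis:
  "(wedge p q)\<^sup>2 * geod_form u v z
     = wedge u p * wedge v p * (cmod (lin_form q z))\<^sup>2 + wedge u q * wedge v q * (cmod (lin_form p z))\<^sup>2
       - (wedge u p * wedge v q + wedge u q * wedge v p) * geod_form p q z"
proof -
  have comb: "lin_form w z * of_real (wedge p q)
      = lin_form p z * of_real (wedge w q) - lin_form q z * of_real (wedge w p)" for w
    by (cases w; cases p; cases q) (simp add: lin_form_def algebra_simps)
  have expand: "Re ((P * of_real a - Q * of_real b) * cnj (P * of_real c - Q * of_real d))
      = b * d * (cmod Q)\<^sup>2 + a * c * (cmod P)\<^sup>2 - (b * c + a * d) * Re (P * cnj Q)" for P Q a b c d
    unfolding cmod_power2 by (simp add: power2_eq_square algebra_simps)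
  have "(wedge p q)\<^sup>2 * geod_form u v z
      = Re ((lin_form u z * of_real (wedge p q)) * cnj (lin_form v z * of_real (wedge p q)))"
    by (simp add: geod_form_def power2_eq_square) (simp add: algebra_simps)
  also have "\<dots> = Re ((lin_form p z * of_real (wedge u q) - lin_form q z * of_real (wedge u p))
      * cnj (lin_form p z * of_real (wedge v q) - lin_form q z * of_real (wedge v p)))"
    unfolding comb ..
  also have "\<dots> = wedge u p * wedge v p * (cmod (lin_form q z))\<^sup>2 + wedge u q * wedge v q * (cmod (lin_form p z))\<^sup>2
       - (wedge u p * wedge v q + wedge u q * wedge v p) * geod_form p q z"
    unfolding geod_form_def by (rule expand)
  finally show ?thesis .
qed

lemma geod_subset_lside:
  assumes z: "z \<in> geod g" and "bleft G (fst g)" and "bleft G (snd g)"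
  shows "z \<in> lside G"
proof -
  define p q u v where "p = hcoord (fst g)" and "q = hcoord (snd g)"
    and "u = hcoord (fst G)" and "v = hcoord (snd G)"
  have zz: "Im z > 0" "geod_form p q z = 0" using z by (auto simp: geod_iff_geod_form p_def q_def)
  have a: "wedge v u * wedge u p * wedge v p > 0" and b: "wedge v u * wedge u q * wedge v q > 0"
    using assms(2,3) by (simp_all add: bleft_iff_hleft hleft_def u_def v_def p_def q_def)
  have "(cmod (lin_form p z))\<^sup>2 > 0" "(cmod (lin_form q z))\<^sup>2 > 0"
    using lin_form_nonzero zz(1) by (auto simp: p_def q_def)
  then have "(wedge v u * wedge u p * wedge v p) * (cmod (lin_form q z))\<^sup>2
      + (wedge v u * wedge u q * wedge v q) * (cmod (lin_form p z))\<^sup>2 > 0"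
    using a b by (simp add: add_pos_pos)
  also have "\<dots> = wedge v u * ((wedge p q)\<^sup>2 * geod_form u v z)"
    unfolding geod_form_in_basis zz(2) by (simp add: algebra_simps)
  also have "\<dots> = (wedge p q)\<^sup>2 * side_form u v z"
    by (simp add: side_form_def)
  finally have "side_form u v z > 0" by (simp add: zero_less_mult_iff)
  then show ?thesis using zz(1) by (simp add: lside_iff_side_form u_def v_def)
qed

lemma pos_eq_lin_form:
  "fst c \<noteq> snd c \<Longrightarrow> pos c z = cmod (lin_form (hcoord (fst c)) z) / cmod (lin_form (hcoord (snd c)) z)"
  by (cases c; cases "fst c"; cases "snd c") (auto simp: pos_def lin_form_def norm_minus_commute)

lemma pos_nonneg: "pos c z \<ge> 0"
  by (cases c) (auto simp: pos_def split: bpt.splits)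

text \<open>Along c the side form of (u, v) is a positive multiple of A + B pos^2, where the signs
  of A and B tell on which side of (u, v) the tail and the head of c lie.\<close>
lemma side_form_along_geod:
  assumes z: "z \<in> geod c"
  shows "\<exists>K>0. side_form u v z = K * (wedge v u * wedge u (hcoord (fst c)) * wedge v (hcoord (fst c))
            + wedge v u * wedge u (hcoord (snd c)) * wedge v (hcoord (snd c)) * (pos c z)\<^sup>2)"
proof -
  define p q where "p = hcoord (fst c)" and "q = hcoord (snd c)"
  have zz: "Im z > 0" "fst c \<noteq> snd c" "geod_form p q z = 0"
    using z by (auto simp: geod_iff_geod_form p_def q_def)
  have pq: "wedge p q \<noteq> 0" using zz(2) wedge_hcoord_eq_0_iff by (simp add: p_def q_def)
  have Q: "cmod (lin_form q z) > 0" using lin_form_nonzero zz(1) by (auto simp: q_def)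
  have ps: "(pos c z)\<^sup>2 * (cmod (lin_form q z))\<^sup>2 = (cmod (lin_form p z))\<^sup>2"
    using Q unfolding pos_eq_lin_form[OF zz(2)] p_def[symmetric] q_def[symmetric]
    by (simp add: power_divide)
  define K where "K = (cmod (lin_form q z))\<^sup>2 / (wedge p q)\<^sup>2"
  have "K > 0" using Q pq by (simp add: K_def)
  have "(wedge p q)\<^sup>2 * side_form u v z = wedge v u * ((wedge p q)\<^sup>2 * geod_form u v z)"
    unfolding side_form_def by simp
  also have "\<dots> = (wedge v u * wedge u p * wedge v p) * (cmod (lin_form q z))\<^sup>2
      + (wedge v u * wedge u q * wedge v q) * ((pos c z)\<^sup>2 * (cmod (lin_form q z))\<^sup>2)"
    unfolding geod_form_in_basis zz(3) ps by (simp add: algebra_simps)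
  finally have "(wedge p q)\<^sup>2 * side_form u v z = (cmod (lin_form q z))\<^sup>2
      * (wedge v u * wedge u p * wedge v p + wedge v u * wedge u q * wedge v q * (pos c z)\<^sup>2)"
    by (simp add: algebra_simps)
  then have "side_form u v z
      = K * (wedge v u * wedge u p * wedge v p + wedge v u * wedge u q * wedge v q * (pos c z)\<^sup>2)"
    using pq by (simp add: K_def field_simps)
  then show ?thesis using \<open>K > 0\<close> unfolding p_def q_def by blast
qed

lemma geod_point_with_parameter:
  fixes p q :: hvec
  assumes "s * wedge q p > 0"
  obtains z D where "Im z > 0" "D \<noteq> 0"
    "lin_form p z = \<i> * of_real (s * wedge p q) / D" "lin_form q z = of_real (wedge q p) / D"
proof -
  obtain p1 p2 where p: "p = (p1, p2)" by (cases p)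
  obtain q1 q2 where q: "q = (q1, q2)" by (cases q)
  define D where "D = complex_of_real p2 + \<i> * of_real (s * q2)"
  define z where "z = (complex_of_real p1 + \<i> * of_real (s * q1)) / D"
  have D: "D \<noteq> 0"
  proof
    assume "D = 0"
    then have "p2 = 0" "s * q2 = 0" by (auto simp: D_def complex_eq_iff)
    then show False using assms p q by auto
  qed
  have "Im z = s * wedge q p / (cmod D)\<^sup>2"
    unfolding z_def D_def p q cmod_power2 by (simp add: Im_divide algebra_simps)
  then have "Im z > 0" using assms D by simp
  moreover have "lin_form p z = \<i> * of_real (s * wedge p q) / D" "lin_form q z = of_real (wedge q p) / D"
    using D unfolding z_def p q by (simp_all add: lin_form_def field_simps D_def algebra_simps)
  ultimately show ?thesis using D that by blast
qed

lemma geodesics_meet: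
  fixes p q u v :: hvec
  assumes pq: "wedge p q \<noteq> 0" and vu: "wedge v u \<noteq> 0"
    and A: "wedge v u * wedge u p * wedge v p < 0" and B: "wedge v u * wedge u q * wedge v q > 0"
  shows "\<exists>z. Im z > 0 \<and> geod_form p q z = 0 \<and> geod_form u v z = 0"
proof -
  define r where "r = - (wedge v u * wedge u p * wedge v p) / (wedge v u * wedge u q * wedge v q)"
  have r: "r > 0" unfolding r_def using A B by (intro divide_pos_pos) linarith+
  define s where "s = (if wedge q p > 0 then sqrt r else - sqrt r)"
  have s2: "s\<^sup>2 = r" using r by (simp add: s_def)
  have "s * wedge q p > 0"
    using r pq wedge_antisym[of p q] by (auto simp: s_def mult_neg_neg mult_pos_neg)
  \<comment> \<open>the point of the geodesic from p to q whose parameter pos has square r\<close>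
  then obtain z D where z: "Im z > 0" "D \<noteq> 0"
    and dp: "lin_form p z = \<i> * of_real (s * wedge p q) / D" and dq: "lin_form q z = of_real (wedge q p) / D"
    by (rule geod_point_with_parameter)
  have "geod_form p q z = 0"
    unfolding geod_form_def dp dq by (simp add: Re_divide)
  moreover have "geod_form u v z = 0"
  proof -
    have cP: "(cmod (lin_form p z))\<^sup>2 = s\<^sup>2 * (wedge p q)\<^sup>2 / (cmod D)\<^sup>2"
      unfolding dp by (simp add: norm_mult norm_divide power_divide power_mult_distrib)
    have cQ: "(cmod (lin_form q z))\<^sup>2 = (wedge q p)\<^sup>2 / (cmod D)\<^sup>2"
      unfolding dq by (simp add: norm_divide power_divide)
    have "(wedge p q)\<^sup>2 * geod_form u v z
        = wedge u p * wedge v p * (cmod (lin_form q z))\<^sup>2 + wedge u q * wedge v q * (cmod (lin_form p z))\<^sup>2"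
      using geod_form_in_basis[of p q u v z] \<open>geod_form p q z = 0\<close> by simp
    also have "\<dots> = (wedge p q)\<^sup>2 / (cmod D)\<^sup>2 * (wedge u p * wedge v p + r * (wedge u q * wedge v q))"
      unfolding cP cQ s2 using wedge_antisym[of q p] z(2) by (simp add: power2_eq_square field_simps)
    also have "wedge u p * wedge v p + r * (wedge u q * wedge v q) = 0"
    proof -
      have "wedge u q \<noteq> 0" "wedge v q \<noteq> 0" using B by auto
      then show ?thesis using vu by (simp add: r_def field_simps)
    qed
    finally have "(wedge p q)\<^sup>2 * geod_form u v z = 0" by simp
    then show ?thesis using pq by simp
  qed
  ultimately show ?thesis using z(1) by blast
qed

lemma crossing_geodesics_meet:
  assumes "bleft L (snd c)" and "bleft (prod.swap L) (fst c)"
  shows "\<exists>z. z \<in> geod c \<and> z \<in> geod L"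
proof -
  define p q u v where "p = hcoord (fst c)" and "q = hcoord (snd c)"
    and "u = hcoord (fst L)" and "v = hcoord (snd L)"
  have B: "wedge v u * wedge u q * wedge v q > 0"
    using assms(1) by (simp add: bleft_iff_hleft hleft_def u_def v_def q_def)
  have "wedge u v * wedge v p * wedge u p > 0"
    using assms(2) by (simp add: bleft_iff_hleft hleft_def u_def v_def p_def)
  then have A: "wedge v u * wedge u p * wedge v p < 0"
    using wedge_antisym[of u v] by (simp add: algebra_simps)
  have vu: "wedge v u \<noteq> 0" using B by auto
  have ne: "fst c \<noteq> snd c" using A B unfolding p_def q_def by (auto simp: algebra_simps)
  have pq: "wedge p q \<noteq> 0" using ne wedge_hcoord_eq_0_iff unfolding p_def q_def by auto
  obtain z where z: "Im z > 0" "geod_form p q z = 0" "geod_form u v z = 0"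
    using geodesics_meet[OF pq vu A B] by blast
  have "fst L \<noteq> snd L" using vu wedge_hcoord_eq_0_iff unfolding u_def v_def by metis
  then show ?thesis using z ne by (auto simp: geod_iff_geod_form p_def q_def u_def v_def)
qed

lemma pos_monotone_across:
  assumes head: "bleft L (snd c)" and z: "z \<in> geod c" "z \<in> geod L" and w: "w \<in> geod c"
  shows "w \<in> lside L \<Longrightarrow> pos c z < pos c w" and "w \<in> lside (prod.swap L) \<Longrightarrow> pos c w < pos c z"
proof -
  define u v where "u = hcoord (fst L)" and "v = hcoord (snd L)"
  define A B where "A = wedge v u * wedge u (hcoord (fst c)) * wedge v (hcoord (fst c))"
    and "B = wedge v u * wedge u (hcoord (snd c)) * wedge v (hcoord (snd c))"
  have "B > 0" using head by (simp add: bleft_iff_hleft hleft_def B_def u_def v_def)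
  obtain K1 where K1: "K1 > 0" "side_form u v z = K1 * (A + B * (pos c z)\<^sup>2)"
    using side_form_along_geod[OF z(1)] A_def B_def by blast
  obtain K2 where K2: "K2 > 0" "side_form u v w = K2 * (A + B * (pos c w)\<^sup>2)"
    using side_form_along_geod[OF w] A_def B_def by blast
  have "side_form u v z = 0" using z(2) by (simp add: geod_iff_geod_form side_form_def u_def v_def)
  then have z0: "A + B * (pos c z)\<^sup>2 = 0" using K1 by simp
  show "pos c z < pos c w" if "w \<in> lside L"
  proof -
    have "side_form u v w > 0" using that by (simp add: lside_iff_side_form u_def v_def)
    then have "A + B * (pos c w)\<^sup>2 > 0" using K2 by (simp add: zero_less_mult_iff)
    then have "(pos c z)\<^sup>2 < (pos c w)\<^sup>2" using z0 \<open>B > 0\<close> by (smt (verit) mult_less_cancel_left_pos)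
    then show ?thesis using pos_nonneg by (simp add: power_less_imp_less_base)
  qed
  show "pos c w < pos c z" if "w \<in> lside (prod.swap L)"
  proof -
    have "side_form u v w < 0" using that by (simp add: lside_swap_iff u_def v_def)
    then have "A + B * (pos c w)\<^sup>2 < 0" using K2 by (simp add: mult_less_0_iff)
    then have "(pos c w)\<^sup>2 < (pos c z)\<^sup>2" using z0 \<open>B > 0\<close> by (smt (verit) mult_less_cancel_left_pos)
    then show ?thesis using pos_nonneg by (simp add: power_less_imp_less_base)
  qed
qed

lemma head_right_of_geod_if_crossing_later:
  assumes z: "z \<in> geod c" "z \<in> lside T" and w: "w \<in> geod c" "w \<in> lside (prod.swap T)"
    and zw: "pos c z < pos c w"
  shows "bleft (prod.swap T) (snd c)"
proof -
  define u v where "u = hcoord (fst T)" and "v = hcoord (snd T)"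
  define A B where "A = wedge v u * wedge u (hcoord (fst c)) * wedge v (hcoord (fst c))"
    and "B = wedge v u * wedge u (hcoord (snd c)) * wedge v (hcoord (snd c))"
  obtain K1 where K1: "K1 > 0" "side_form u v z = K1 * (A + B * (pos c z)\<^sup>2)"
    using side_form_along_geod[OF z(1)] A_def B_def by blast
  obtain K2 where K2: "K2 > 0" "side_form u v w = K2 * (A + B * (pos c w)\<^sup>2)"
    using side_form_along_geod[OF w(1)] A_def B_def by blast
  have "side_form u v z > 0" using z(2) by (simp add: lside_iff_side_form u_def v_def)
  then have a: "A + B * (pos c z)\<^sup>2 > 0" using K1 by (simp add: zero_less_mult_iff)
  have "side_form u v w < 0" using w(2) by (simp add: lside_swap_iff u_def v_def)
  then have b: "A + B * (pos c w)\<^sup>2 < 0" using K2 by (simp add: mult_less_0_iff)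
  have "(pos c z)\<^sup>2 < (pos c w)\<^sup>2" using zw pos_nonneg by (intro power_strict_mono) auto
  moreover have "B * ((pos c w)\<^sup>2 - (pos c z)\<^sup>2) < 0" using a b by (simp add: algebra_simps)
  ultimately have "B < 0" by (simp add: mult_less_0_iff)
  then show ?thesis
    using wedge_antisym[of u v] by (simp add: bleft_iff_hleft hleft_def B_def u_def v_def algebra_simps)
qed

lemma moeb_denom_nonzero: "Im z > 0 \<Longrightarrow> det M \<noteq> 0 \<Longrightarrow> of_real (M$2$1) * z + of_real (M$2$2) \<noteq> 0"
  for M :: "real^2^2"
proof
  assume z: "Im z > 0" and d: "det M \<noteq> 0" and "of_real (M$2$1) * z + of_real (M$2$2) = 0"
  then have "M$2$1 * Im z = 0" "M$2$1 * Re z + M$2$2 = 0" by (auto simp: complex_eq_iff)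
  then have "M$2$1 = 0" "M$2$2 = 0" using z by auto
  then show False using d by (simp add: det_2)
qed

lemma lin_form_moeb:
  fixes M :: "real^2^2"
  assumes z: "Im z > 0" and d: "det M = 1"
  shows "lin_form (hmul M u) (moeb M z) = lin_form u z / (of_real (M$2$1) * z + of_real (M$2$2))"
proof -
  define A B C D where "A = complex_of_real (M$1$1)" and "B = complex_of_real (M$1$2)"
    and "C = complex_of_real (M$2$1)" and "D = complex_of_real (M$2$2)"
  have n: "C * z + D \<noteq> 0" using moeb_denom_nonzero[OF z] d by (simp add: C_def D_def)
  have det: "A * D - B * C = 1" using d unfolding A_def B_def C_def D_def det_2
    by (simp flip: of_real_mult of_real_diff)
  have e: "(A * U1 + B * U2) - (C * U1 + D * U2) * ((A * z + B) / (C * z + D)) = (U1 - U2 * z) / (C * z + D)"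
    for U1 U2
  proof -
    have "(A * U1 + B * U2) * (C * z + D) - (C * U1 + D * U2) * (A * z + B) = (A * D - B * C) * (U1 - U2 * z)"
      by (simp add: algebra_simps)
    then show ?thesis using n det by (simp add: field_simps)
  qed
  obtain u1 u2 where u: "u = (u1, u2)" by (cases u)
  show ?thesis
    using e[of "of_real u1" "of_real u2"]
    unfolding u lin_form_def hmul_def moeb_def A_def B_def C_def D_def by simp
qed

lemma Im_moeb:
  fixes M :: "real^2^2"
  assumes "det M = 1"
  shows "Im (moeb M z) = Im z / (cmod (of_real (M$2$1) * z + of_real (M$2$2)))\<^sup>2"
proof -
  have "M$1$1 * M$2$2 - M$1$2 * M$2$1 = 1" using assms by (simp add: det_2)
  then have "M$1$1 * Im z * (M$2$1 * Re z + M$2$2) - (M$1$1 * Re z + M$1$2) * (M$2$1 * Im z) = Im z"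
    by (simp add: algebra_simps)
  then show ?thesis unfolding moeb_def cmod_power2 Im_divide by (simp add: algebra_simps)
qed

lemma moeb_in_geod_gact:
  fixes M :: "real^2^2"
  assumes z: "z \<in> geod g" and d: "det M = 1"
  shows "moeb M z \<in> geod (gact M g)"
proof -
  define p q where "p = hcoord (fst g)" and "q = hcoord (snd g)"
  have zz: "Im z > 0" "fst g \<noteq> snd g" "geod_form p q z = 0"
    using z by (auto simp: geod_iff_geod_form p_def q_def)
  have d0: "det M \<noteq> 0" using d by simp
  obtain k1 where k1: "k1 \<noteq> 0" "hcoord (bact M (fst g)) = k1 *\<^sub>R hmul M p"
    using hcoord_bact[OF d0] p_def by blast
  obtain k2 where k2: "k2 \<noteq> 0" "hcoord (bact M (snd g)) = k2 *\<^sub>R hmul M q"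
    using hcoord_bact[OF d0] q_def by blast
  define D where "D = of_real (M$2$1) * z + of_real (M$2$2)"
  have "(cmod D)\<^sup>2 > 0" using moeb_denom_nonzero[OF zz(1) d0] by (simp add: D_def)
  then have "Im (moeb M z) > 0" using Im_moeb[OF d] zz(1) by (simp add: D_def)
  moreover have "bact M (fst g) \<noteq> bact M (snd g)"
    using zz(2) bact_inv2'[OF d] by metis
  moreover have "geod_form (hmul M p) (hmul M q) (moeb M z) = geod_form p q z / (cmod D)\<^sup>2"
  proof -
    have "lin_form p z / D * cnj (lin_form q z / D) = (lin_form p z * cnj (lin_form q z)) / (D * cnj D)"
      by simp
    also have "D * cnj D = of_real ((cmod D)\<^sup>2)" by (simp add: complex_mult_cnj cmod_power2)
    finally have "lin_form p z / D * cnj (lin_form q z / D)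
        = (lin_form p z * cnj (lin_form q z)) / of_real ((cmod D)\<^sup>2)" .
    then show ?thesis
      unfolding geod_form_def lin_form_moeb[OF zz(1) d] D_def[symmetric] by (metis Re_divide_of_real)
  qed
  ultimately show ?thesis
    unfolding geod_iff_geod_form fst_gact snd_gact k1(2) k2(2) geod_form_scaleR using zz(3) by simp
qed

lemma gen_group_generator: "s \<in> S \<Longrightarrow> s \<in> gen_group S"
  using gen_group.step[OF _ gen_group.one, of s S] by simp

lemma gen_group_mult: "M \<in> gen_group S \<Longrightarrow> N \<in> gen_group S \<Longrightarrow> M ** N \<in> gen_group S"
proof (induction M rule: gen_group.induct)
  case (step s M) then show ?case by (metis gen_group.step matrix_mul_assoc)
qed simp

lemma gen_group_det:
  fixes M :: "real^2^2"
  assumes "\<And>s. s \<in> S \<Longrightarrow> det s = 1" and "M \<in> gen_group S"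
  shows "det M = 1"
  using assms(2) by induction (simp_all add: assms(1) det_mul)

lemma gen_group_inv2:
  assumes "\<And>s. s \<in> S \<Longrightarrow> inv2 s \<in> gen_group S" and "M \<in> gen_group S"
  shows "inv2 M \<in> gen_group S"
  using assms(2) by induction (simp_all add: gen_group.one assms(1) inv2_matrix_mult gen_group_mult)

lemma det_Imat: "det Imat = 1"
  by (simp add: Imat_def det_2)

lemma Imat_Imat: "Imat ** Imat = - mat 1"
  by (simp add: Imat_def matrix2_eq_iff matrix_mult_2_nth)

lemma inv2_Imat: "inv2 Imat = - Imat"
  by (simp add: Imat_def matrix2_eq_iff)

lemma bact_Imat: "bact Imat Inf = Fin 0" "bact Imat (Fin 0) = Inf" "y \<noteq> 0 \<Longrightarrow> bact Imat (Fin y) = Fin (- 1 / y)"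
  by (simp_all add: bact_def Imat_def)

lemma gact_Imat_e0: "gact Imat e0 = prod.swap e0"
  by (simp add: gact_def e0_def bact_Imat)

lemma gact_Imat_Imat: "gact Imat (gact Imat g) = g"
  by (simp add: gact_matrix_mult[symmetric] det_Imat Imat_Imat gact_uminus)

lemma bleft_gact_Imat_e0:
  "bleft e0 \<xi> \<Longrightarrow> bleft (prod.swap e0) (bact Imat \<xi>)"
  "bleft (prod.swap e0) \<xi> \<Longrightarrow> bleft e0 (bact Imat \<xi>)"
  by (cases \<xi>; auto simp: bact_Imat bleft_e0_Fin bleft_def e0_def)+

lemma cis_minus_2pi_3: "(cis (- 2 * pi / 3))^3 = 1" "cis (- 2 * pi / 3) \<noteq> 1"
proof -
  have "(cis (- 2 * pi / 3))^3 = cis (real 3 * (- 2 * pi / 3))" by (rule Complex.DeMoivre)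
  also have "real 3 * (- 2 * pi / 3) = 2 * pi * (-1)" by simp
  also have "cis (2 * pi * (-1)) = 1" by (rule cis_multiple_2pi) simp
  finally show "(cis (- 2 * pi / 3))^3 = 1" .
  have "sin (2 * pi / 3) > 0" by (rule sin_gt_zero) auto
  then show "cis (- 2 * pi / 3) \<noteq> 1" by (auto simp: complex_eq_iff)
qed

text \<open>At the fixed point p the derivative of z \<mapsto> (az+b)/(cz+d) is 1/e^2 with e = cp+d an
  eigenvalue, so e^2 is a primitive cube root of unity and the trace e + 1/e has square 1.\<close>
lemma admissible_trace_sq:
  assumes adm: "admissible_R R"
  shows "(R$1$1 + R$2$2)\<^sup>2 = 1"
proof -
  have d: "det R = 1" using adm by (simp add: admissible_R_def)
  obtain p where p: "Im p > 0" "moeb R p = p" "(moeb R has_field_derivative cis (- 2 * pi / 3)) (at p)"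
    using adm unfolding admissible_R_def by blast
  define A B C D where "A = complex_of_real (R$1$1)" and "B = complex_of_real (R$1$2)"
    and "C = complex_of_real (R$2$1)" and "D = complex_of_real (R$2$2)"
  have dA: "A * D - B * C = 1" using d unfolding A_def B_def C_def D_def det_2
    by (simp flip: of_real_mult of_real_diff)
  define e where "e = C * p + D"
  have e_nz: "e \<noteq> 0" using moeb_denom_nonzero[OF p(1), of R] d by (simp add: e_def C_def D_def)
  have mo: "moeb R = (\<lambda>z. (A * z + B) / (C * z + D))" by (auto simp: moeb_def A_def B_def C_def D_def)
  have "((\<lambda>z. (A * z + B) / (C * z + D)) has_field_derivative ((A * (C * p + D) - (A * p + B) * C) / (C * p + D)\<^sup>2)) (at p)"
    using e_nz unfolding e_def by (auto intro!: derivative_eq_intros simp: power2_eq_square)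
  moreover have "A * (C * p + D) - (A * p + B) * C = 1" using dA by (simp add: algebra_simps)
  ultimately have "((\<lambda>z. (A * z + B) / (C * z + D)) has_field_derivative (1 / e\<^sup>2)) (at p)"
    unfolding e_def by simp
  then have om: "cis (- 2 * pi / 3) = 1 / e\<^sup>2" using p(3) mo DERIV_unique by metis
  define \<mu> where "\<mu> = e\<^sup>2"
  have mu: "\<mu> \<noteq> 0" using e_nz by (simp add: \<mu>_def)
  have "\<mu>^3 = 1" using cis_minus_2pi_3(1) mu unfolding om \<mu>_def by (simp add: power_divide field_simps)
  moreover have "\<mu> \<noteq> 1" using cis_minus_2pi_3(2) unfolding om \<mu>_def by auto
  ultimately have mq: "\<mu>\<^sup>2 + \<mu> + 1 = 0"
    using mult_eq_0_iff[of "\<mu> - 1" "\<mu>\<^sup>2 + \<mu> + 1"]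
    by (simp add: algebra_simps power3_eq_cube power2_eq_square)
  have fx: "A * p + B = e * p" using p(2) e_nz unfolding mo e_def by (simp add: field_simps)
  have ch: "e\<^sup>2 - (A + D) * e + 1 = 0"
  proof -
    have "e\<^sup>2 - (A + D) * e + 1 = C * ((C * p + D) * p - A * p) - A * D + 1"
      by (simp add: e_def power2_eq_square algebra_simps)
    also have "(C * p + D) * p - A * p = B" using fx unfolding e_def by (simp add: algebra_simps)
    finally show ?thesis using dA by (simp add: algebra_simps)
  qed
  have "(A + D)\<^sup>2 * \<mu> = (\<mu> + 1)\<^sup>2" using ch unfolding \<mu>_def by (simp add: power2_eq_square algebra_simps)
  also have "\<dots> = \<mu>" using mq by (simp add: power2_eq_square algebra_simps)
  finally have "(A + D)\<^sup>2 = 1" using mu by simp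
  then have "complex_of_real ((R$1$1 + R$2$2)\<^sup>2) = 1" by (simp add: A_def D_def)
  then show ?thesis using of_real_eq_1_iff by blast
qed

lemma admissible_cube: "admissible_R R \<Longrightarrow> R ** R ** R = mat 1 \<or> R ** R ** R = - mat 1"
proof -
  assume adm: "admissible_R R"
  define a b c d where "a = R$1$1" and "b = R$1$2" and "c = R$2$1" and "d = R$2$2"
  have det: "a * d - b * c = 1" using adm by (simp add: admissible_R_def det_2 a_def b_def c_def d_def)
  have tr: "(a + d)\<^sup>2 = 1" using admissible_trace_sq[OF adm] by (simp add: a_def d_def)
  \<comment> \<open>Cayley--Hamilton: R^3 = -(a+d) I when the determinant is 1 and the trace squares to 1\<close>
  have "R ** R ** R = mat2 (-(a + d)) 0 0 (-(a + d))"
    unfolding matrix2_eq_iff matrix_mult_2_nth mat2_nth a_def[symmetric] b_def[symmetric]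
      c_def[symmetric] d_def[symmetric]
    using det tr by algebra
  moreover have "a + d = 1 \<or> a + d = -1" using tr by (simp add: power2_eq_1_iff)
  ultimately show ?thesis by (auto simp: matrix2_eq_iff)
qed

lemma i_in_geod_e0: "\<i> \<in> geod e0"
  by (simp add: geod_def e0_def)

lemma i_in_Delta0: "\<i> \<in> Delta0"
  using abs_Im_le_cmod[of "\<i> - 1/2"] by (simp add: Delta0_def)

lemma vertical_ray_in_Delta0: "Y \<ge> 1 \<Longrightarrow> 1/2 + \<i> * of_real Y \<in> Delta0"
  by (simp add: Delta0_def norm_mult)

lemma geod_beside_e0_positive:
  assumes "disjoint_geods e0 (Fin t, Fin h)" and P: "P \<in> geod (Fin t, Fin h)" "P \<in> cl_lside e0"
  shows "0 < t \<and> 0 < h"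
proof -
  let ?S = "(Fin t, Fin h)"
  have nz: "t \<noteq> 0" "h \<noteq> 0" and gd: "geod e0 \<inter> geod ?S = {}"
    using assms(1) by (auto simp: disjoint_geods_def e0_def)
  have "\<not> (t < 0 \<and> 0 < h)"
  proof
    assume "t < 0 \<and> 0 < h"
    then have "bleft e0 (snd ?S)" "bleft (prod.swap e0) (fst ?S)" by (auto simp: bleft_e0_Fin)
    then show False using crossing_geodesics_meet gd by blast
  qed
  moreover have "\<not> (h < 0 \<and> 0 < t)"
  proof
    assume "h < 0 \<and> 0 < t"
    then have "bleft e0 (snd (prod.swap ?S))" "bleft (prod.swap e0) (fst (prod.swap ?S))"
      by (auto simp: bleft_e0_Fin)
    then show False using crossing_geodesics_meet gd geod_swap by blast
  qed
  moreover have "\<not> (t < 0 \<and> h < 0)"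
  proof
    assume "t < 0 \<and> h < 0"
    then have "P \<in> lside (prod.swap e0)" using geod_subset_lside P(1) by (auto simp: bleft_e0_Fin)
    then show False using lside_swap_not_cl_lside P(2) by blast
  qed
  ultimately show ?thesis using nz by linarith
qed

lemma geod_left_of_vertical_ray_increasing:
  assumes "t \<noteq> h" and ray: "\<And>Y. Y \<ge> 1 \<Longrightarrow> 1/2 + \<i> * of_real Y \<in> cl_lside (Fin t, Fin h)"
  shows "t < h"
proof (rule ccontr)
  assume "\<not> t < h"
  then have ht: "h < t" using assms(1) by simp
  define Y where "Y = \<bar>t - h\<bar> + 1"
  define z where "z = 1/2 + \<i> * of_real Y"
  have "Y \<ge> 1" by (simp add: Y_def)
  then have "z \<in> cl_lside (Fin t, Fin h)" unfolding z_def by (rule ray)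
  then have "(h - t) * geod_form (t, 1) (h, 1) z > 0 \<or> geod_form (t, 1) (h, 1) z = 0"
    by (auto simp: cl_lside_def lside_iff_side_form geod_iff_geod_form side_form_def)
  then have "geod_form (t, 1) (h, 1) z \<le> 0" using ht by (auto simp: zero_less_mult_iff)
  moreover have "geod_form (t, 1) (h, 1) z = ((t + h) / 2 - 1/2)\<^sup>2 - ((t - h) / 2)\<^sup>2 + Y\<^sup>2"
    by (simp add: geod_form_Fin z_def power2_eq_square field_simps)
  moreover have "((t - h) / 2)\<^sup>2 < Y\<^sup>2"
  proof -
    have "\<bar>(t - h) / 2\<bar> < Y" by (simp add: Y_def)
    then have "\<bar>(t - h) / 2\<bar>\<^sup>2 < Y\<^sup>2" by (intro power_strict_mono) auto
    then show ?thesis by (metis power2_abs)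
  qed
  ultimately show False by (smt (verit) zero_le_power2)
qed

lemma admissible_side_shape:
  assumes adm: "admissible_R R" and S: "S \<in> {side1 R, side2 R}"
  shows "\<exists>t h. S = (Fin t, Fin h) \<and> 0 < t \<and> t < h"
proof -
  have d: "det R = 1" and D0: "Delta0 \<subseteq> Delta R" and inv: "moeb R ` Delta R = Delta R"
    and dj: "disjoint_geods e0 (side1 R)" "disjoint_geods e0 (side2 R)"
    using adm by (auto simp: admissible_R_def)
  have Dsub: "Delta R \<subseteq> cl_lside e0" "Delta R \<subseteq> cl_lside (side1 R)" "Delta R \<subseteq> cl_lside (side2 R)"
    by (auto simp: Delta_def)
  \<comment> \<open>the images of i under R and R^2 are points of the triangle on these sides\<close>
  have side2: "side2 R = gact R (side1 R)" using d by (simp add: side2_def side1_def gact_matrix_mult)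
  have iD: "\<i> \<in> Delta R" using D0 i_in_Delta0 by blast
  then have P1: "moeb R \<i> \<in> Delta R" "moeb R (moeb R \<i>) \<in> Delta R" using inv by blast+
  have P1g: "moeb R \<i> \<in> geod (side1 R)"
    unfolding side1_def using moeb_in_geod_gact[OF i_in_geod_e0 d] .
  have P2g: "moeb R (moeb R \<i>) \<in> geod (side2 R)"
    unfolding side2 using moeb_in_geod_gact[OF P1g d] .
  obtain P where P: "disjoint_geods e0 S" "P \<in> geod S" "P \<in> cl_lside e0"
    "\<And>Y. Y \<ge> 1 \<Longrightarrow> 1/2 + \<i> * of_real Y \<in> cl_lside S"
    using S dj P1 P1g P2g Dsub D0 vertical_ray_in_Delta0 by blast
  then obtain a b where ab: "S = (a, b)" "a \<noteq> b" by (cases S) (auto simp: geod_iff_geod_form)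
  then obtain t h where th: "S = (Fin t, Fin h)"
    using P(1) by (cases a; cases b) (auto simp: disjoint_geods_def e0_def)
  show ?thesis
    using th geod_beside_e0_positive[of t h P] geod_left_of_vertical_ray_increasing[of t h] P ab
    by auto
qed

lemma bleft_decreasing_iff: "t < h \<Longrightarrow> bleft (Fin h, Fin t) \<xi> \<longleftrightarrow> (\<exists>y. \<xi> = Fin y \<and> t < y \<and> y < h)"
  by (cases \<xi>) (auto simp: bleft_increasing)

lemma bleft_increasing_if_left_of_swap_e0:
  "0 < t \<Longrightarrow> t < h \<Longrightarrow> bleft (prod.swap e0) \<xi> \<Longrightarrow> bleft (Fin t, Fin h) \<xi>"
  by (cases \<xi>) (auto simp: bleft_increasing bleft_e0_Fin)

section \<open>The Gamma-translates of e0\<close>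

lemma Gamma_mult: "a \<in> Gamma R \<Longrightarrow> b \<in> Gamma R \<Longrightarrow> a ** b \<in> Gamma R"
  unfolding Gamma_def by (rule gen_group_mult)

lemma Gamma_inv2: "a \<in> Gamma R \<Longrightarrow> inv2 a \<in> Gamma R"
  unfolding Gamma_def by (rule gen_group_inv2) (auto intro: gen_group_generator)

lemma R_in_Gamma: "R \<in> Gamma R" and Imat_in_Gamma: "Imat \<in> Gamma R"
  unfolding Gamma_def by (auto intro: gen_group_generator)

lemma Gamma_det: "admissible_R R \<Longrightarrow> \<delta> \<in> Gamma R \<Longrightarrow> det \<delta> = 1"
  unfolding Gamma_def by (rule gen_group_det) (auto simp: admissible_R_def det_Imat det_inv2)

definition Delta_sides :: "real^2^2 \<Rightarrow> ogeod set" where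
  "Delta_sides R = {e0, prod.swap e0, side1 R, prod.swap (side1 R), side2 R, prod.swap (side2 R)}"

text \<open>The Gamma-translates of e0 other than the sides of Delta lie beyond e0 (both ends in
  the arc cut off by e0 opposite to Delta) or beyond side1 R or side2 R; this records the
  tree structure of the tiling by the translates of Delta.\<close>
inductive beyond_e0 and beyond_side for R :: "real^2^2" where
  Imat_side: "g \<in> {side1 R, side2 R, prod.swap (side1 R), prod.swap (side2 R)} \<Longrightarrow> beyond_e0 R (gact Imat g)"
| Imat_beyond_side: "beyond_side R g \<Longrightarrow> beyond_e0 R (gact Imat g)"
| R_beyond_e0: "beyond_e0 R g \<Longrightarrow> beyond_side R (gact R g)"
| R2_beyond_e0: "beyond_e0 R g \<Longrightarrow> beyond_side R (gact (R ** R) g)"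

definition well_placed :: "real^2^2 \<Rightarrow> ogeod \<Rightarrow> bool" where
  "well_placed R g \<longleftrightarrow> g \<in> Delta_sides R \<or> beyond_e0 R g \<or> beyond_side R g"

definition both_ends :: "(bpt \<Rightarrow> bool) \<Rightarrow> ogeod \<Rightarrow> bool" where
  "both_ends P g \<longleftrightarrow> P (fst g) \<and> P (snd g)"

context
  fixes R :: "real^2^2"
  assumes adm: "admissible_R R"
begin

lemma det_R: "det R = 1"
  using adm by (simp add: admissible_R_def)

lemma gact_R_R: "gact (R ** R) g = gact R (gact R g)"
  using det_R by (simp add: gact_matrix_mult)

lemma gact_R_cube: "gact R (gact R (gact R g)) = g"
proof -
  have "gact R (gact R (gact R g)) = gact (R ** R ** R) g"
    using det_R by (simp add: gact_matrix_mult det_mul)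
  then show ?thesis using admissible_cube[OF adm] by (auto simp: gact_uminus)
qed

lemma gact_inv2_R: "gact (inv2 R) g = gact R (gact R g)"
  by (metis det_R gact_R_cube gact_inv2')

lemma side2_eq: "side2 R = gact R (side1 R)"
  by (simp add: side2_def side1_def gact_R_R)

lemma gact_R_side2: "gact R (side2 R) = e0"
  by (metis gact_R_cube side1_def side2_eq)

lemma beyond_ends:
  "(beyond_e0 R g \<longrightarrow> both_ends (bleft (prod.swap e0)) g)
   \<and> (beyond_side R g \<longrightarrow> both_ends (bleft (prod.swap (side1 R))) g \<or> both_ends (bleft (prod.swap (side2 R))) g)"
proof (induction rule: beyond_e0_beyond_side.induct)
  case (Imat_side g)
  then obtain S where S: "S \<in> {side1 R, side2 R}" "g = S \<or> g = prod.swap S" by blast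
  obtain t h where "S = (Fin t, Fin h)" "0 < t" "t < h" using admissible_side_shape[OF adm S(1)] by blast
  then have "bleft e0 (fst g)" "bleft e0 (snd g)" using S(2) by (auto simp: bleft_e0_Fin)
  then show ?case by (simp add: both_ends_def fst_gact snd_gact bleft_gact_Imat_e0)
next
  case (Imat_beyond_side g)
  then obtain S where S: "S \<in> {side1 R, side2 R}" "both_ends (bleft (prod.swap S)) g" by blast
  obtain t h where "S = (Fin t, Fin h)" "0 < t" "t < h" using admissible_side_shape[OF adm S(1)] by blast
  then have "bleft e0 (fst g)" "bleft e0 (snd g)"
    using S(2) by (auto simp: both_ends_def bleft_decreasing_iff bleft_e0_Fin)
  then show ?case by (simp add: both_ends_def fst_gact snd_gact bleft_gact_Imat_e0)
next
  case (R_beyond_e0 g)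
  then show ?case
    using bleft_gact[of R "prod.swap e0"] det_R by (simp add: both_ends_def fst_gact snd_gact side1_def gact_swap)
next
  case (R2_beyond_e0 g)
  then show ?case
    using bleft_gact[of "R ** R" "prod.swap e0"] det_R
    by (simp add: both_ends_def fst_gact snd_gact side2_def gact_swap det_mul)
qed

lemma well_placed_gact_Imat: "well_placed R g \<Longrightarrow> well_placed R (gact Imat g)"
  unfolding well_placed_def
proof (elim disjE)
  assume "g \<in> Delta_sides R"
  then show "gact Imat g \<in> Delta_sides R \<or> beyond_e0 R (gact Imat g) \<or> beyond_side R (gact Imat g)"
    using gact_Imat_e0 gact_Imat_Imat[of e0] Imat_side[of g R] by (auto simp: Delta_sides_def)
next
  assume "beyond_e0 R g"
  then show "gact Imat g \<in> Delta_sides R \<or> beyond_e0 R (gact Imat g) \<or> beyond_side R (gact Imat g)"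
    by cases (auto simp: gact_Imat_Imat Delta_sides_def)
qed (simp add: Imat_beyond_side)

lemma well_placed_gact_R: "well_placed R g \<Longrightarrow> well_placed R (gact R g)"
  unfolding well_placed_def
proof (elim disjE)
  assume "g \<in> Delta_sides R"
  moreover have "gact R e0 = side1 R" "gact R (side1 R) = side2 R" "gact R (side2 R) = e0"
    by (simp add: side1_def, rule side2_eq[symmetric], rule gact_R_side2)
  ultimately show "gact R g \<in> Delta_sides R \<or> beyond_e0 R (gact R g) \<or> beyond_side R (gact R g)"
    by (auto simp: Delta_sides_def gact_swap)
next
  assume "beyond_side R g"
  then show "gact R g \<in> Delta_sides R \<or> beyond_e0 R (gact R g) \<or> beyond_side R (gact R g)"
  proof cases
    case (R_beyond_e0 h)
    then show ?thesis using R2_beyond_e0[of R h] by (simp add: gact_R_R)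
  next
    case (R2_beyond_e0 h)
    then show ?thesis by (simp add: gact_R_R gact_R_cube)
  qed
qed (simp add: R_beyond_e0)

lemma well_placed_Gamma: "\<delta> \<in> Gamma R \<Longrightarrow> well_placed R (gact \<delta> e0)"
  unfolding Gamma_def
proof (induction \<delta> rule: gen_group.induct)
  case one
  then show ?case by (simp add: well_placed_def Delta_sides_def)
next
  case (step s M)
  have "gact (s ** M) e0 = gact s (gact M e0)"
    using Gamma_det[OF adm, of M] step(2) by (simp add: Gamma_def gact_matrix_mult)
  then show ?case using step(1,3)
    by (auto simp: inv2_Imat gact_uminus gact_inv2_R well_placed_gact_Imat well_placed_gact_R)
qed

lemma Gamma_diagonal_power:
  assumes K: "K \<in> Gamma R" "K$1$2 = 0" "K$2$1 = 0"
  shows "mat2 (K$1$1 ^ n) 0 0 (K$2$2 ^ n) \<in> Gamma R"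
proof (induction n)
  case 0
  have "mat2 1 0 0 1 = (mat 1 :: real^2^2)" by (simp add: matrix2_eq_iff)
  then show ?case by (simp add: Gamma_def gen_group.one)
next
  case (Suc n)
  have "K ** mat2 (K$1$1 ^ n) 0 0 (K$2$2 ^ n) = mat2 (K$1$1 ^ Suc n) 0 0 (K$2$2 ^ Suc n)"
    using K by (simp add: matrix2_eq_iff matrix_mult_2_nth)
  then show ?case using Gamma_mult[OF K(1) Suc] by simp
qed

text \<open>A power of such an element pushes side1 R so far to the right that its image, a
  Gamma-translate of e0, is neither a side of Delta nor beyond one.\<close>
lemma Gamma_no_expanding_diagonal:
  assumes K: "K \<in> Gamma R" "K$1$2 = 0" "K$2$1 = 0" and big: "(K$1$1)\<^sup>2 > 1"
  shows False
proof -
  define \<kappa> \<kappa>' where "\<kappa> = K$1$1" and "\<kappa>' = K$2$2"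
  have kk: "\<kappa> * \<kappa>' = 1" using Gamma_det[OF adm K(1)] K(2,3) by (simp add: det_2 \<kappa>_def \<kappa>'_def)
  define \<mu> where "\<mu> = \<kappa>\<^sup>2"
  have mu: "\<mu> > 1" using big by (simp add: \<mu>_def \<kappa>_def)
  obtain t1 h1 where s1: "side1 R = (Fin t1, Fin h1)" "0 < t1" "t1 < h1"
    using admissible_side_shape[OF adm] by blast
  obtain t2 h2 where s2: "side2 R = (Fin t2, Fin h2)" "0 < t2" "t2 < h2"
    using admissible_side_shape[OF adm] by blast
  define B where "B = max h1 h2"
  obtain n where n: "B / t1 < \<mu>^n" using real_arch_pow[OF mu] by blast
  define Kn where "Kn = mat2 (\<kappa> ^ n) 0 0 (\<kappa>' ^ n)"
  have Kn: "Kn \<in> Gamma R" unfolding Kn_def \<kappa>_def \<kappa>'_def by (rule Gamma_diagonal_power[OF K(1-3)])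
  have kn: "\<kappa>' ^ n \<noteq> 0" using kk by (metis mult_not_zero power_not_zero zero_neq_one)
  have "\<mu>^n * \<kappa>'^n = \<kappa>^n"
    using kk by (simp add: \<mu>_def power2_eq_square mult.assoc flip: power_mult_distrib)
  then have bx: "bact Kn (Fin x) = Fin (\<mu>^n * x)" for x
    using kn by (simp add: bact_def Kn_def field_simps)
  define g where "g = gact (Kn ** R) e0"
  have "g = gact Kn (side1 R)" using det_R by (simp add: g_def side1_def gact_matrix_mult)
  then have gv: "g = (Fin (\<mu>^n * t1), Fin (\<mu>^n * h1))" using s1(1) by (simp add: gact_def bx)
  have t_big: "\<mu>^n * t1 > B" using n s1(2) by (simp add: pos_divide_less_eq)
  have "well_placed R g" unfolding g_def by (rule well_placed_Gamma[OF Gamma_mult[OF Kn R_in_Gamma]])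
  moreover have "g \<notin> Delta_sides R"
    using t_big s1 s2 by (auto simp: Delta_sides_def gv e0_def B_def)
  moreover have "\<not> beyond_e0 R g"
    using beyond_ends[of g] t_big s1 s2 by (auto simp: both_ends_def gv bleft_e0_Fin B_def)
  moreover have "\<not> beyond_side R g"
    using beyond_ends[of g] t_big s1 s2 by (auto simp: both_ends_def gv bleft_decreasing_iff B_def)
  ultimately show False by (simp add: well_placed_def)
qed

lemma Gamma_stabiliser_e0:
  assumes g: "\<delta> \<in> Gamma R" and stab: "gact \<delta> e0 = e0"
  shows "\<delta> = mat 1 \<or> \<delta> = - mat 1"
proof -
  have "bact \<delta> Inf = Inf" "bact \<delta> (Fin 0) = Fin 0" using stab by (auto simp: gact_def e0_def)
  moreover have ad: "\<delta>$1$1 * \<delta>$2$2 - \<delta>$1$2 * \<delta>$2$1 = 1" using Gamma_det[OF adm g] by (simp add: det_2)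
  ultimately have c0: "\<delta>$2$1 = 0" and b0: "\<delta>$1$2 = 0"
    by (auto simp: bact_def split: if_splits)
  then have ad: "\<delta>$1$1 * \<delta>$2$2 = 1" using ad by simp
  have "\<not> (\<delta>$1$1)\<^sup>2 > 1" using Gamma_no_expanding_diagonal[OF g b0 c0] by blast
  moreover have "\<not> (\<delta>$2$2)\<^sup>2 > 1" using Gamma_no_expanding_diagonal[OF Gamma_inv2[OF g]] b0 c0 by auto
  moreover have "(\<delta>$1$1)\<^sup>2 * (\<delta>$2$2)\<^sup>2 = 1" using ad by (simp flip: power_mult_distrib)
  ultimately have "(\<delta>$1$1)\<^sup>2 = 1"
    by (metis abs_le_square_iff le_less linorder_not_le mult_less_cancel_left1 mult.right_neutral
        zero_le_power2 mult_le_one less_le_not_le)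
  then have "\<delta>$1$1 = 1 \<or> \<delta>$1$1 = -1" by (simp add: power2_eq_1_iff)
  then show ?thesis using ad b0 c0 by (auto simp: matrix2_eq_iff)
qed

end

section \<open>The leaves crossed by c\<close>

lemma oleaves_Gamma_orbit:
  assumes adm: "admissible_R R" and L: "L \<in> oleaves R"
  shows "\<exists>\<delta> \<in> Gamma R. L = gact \<delta> e0"
proof -
  have d: "det R = 1" using adm by (simp add: admissible_R_def)
  have sides: "\<exists>\<delta> \<in> Gamma R. gact g s = gact \<delta> e0"
    if g: "g \<in> Gamma R" and s: "s \<in> {e0, side1 R, side2 R}" for g s
  proof -
    have "gact g (side1 R) = gact (g ** R) e0" "gact g (side2 R) = gact (g ** (R ** R)) e0"
      using d by (simp_all add: side1_def side2_def gact_matrix_mult det_mul)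
    moreover have "g ** R \<in> Gamma R" "g ** (R ** R) \<in> Gamma R"
      using g by (simp_all add: Gamma_mult R_in_Gamma)
    ultimately show ?thesis using s g by auto
  qed
  have swap: "prod.swap (gact \<delta> e0) = gact (\<delta> ** Imat) e0" for \<delta>
    by (simp add: gact_matrix_mult det_Imat gact_Imat_e0 gact_swap)
  from L consider g s where "g \<in> Gamma R" "s \<in> {e0, side1 R, side2 R}" "L = gact g s"
    | g s where "g \<in> Gamma R" "s \<in> {e0, side1 R, side2 R}" "L = prod.swap (gact g s)"
    unfolding oleaves_def by blast
  then show ?thesis
  proof cases
    case 1 then show ?thesis using sides by blast
  next
    case 2 then show ?thesis using sides swap Gamma_mult[OF _ Imat_in_Gamma] by metis
  qed
qed

lemma crosses_RL_iff: "crosses_RL c L \<longleftrightarrow> bleft L (snd c) \<and> bleft (prod.swap L) (fst c)"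
  by (cases L) (simp add: crosses_RL_def)

locale crossing_sequence =
  fixes R :: "real^2^2" and c :: ogeod and l :: "int \<Rightarrow> ogeod"
  assumes adm: "admissible_R R"
    and leaves: "range l = {m \<in> oleaves R. crosses_RL c m}"
    and ordered: "\<forall>m k z w. m < k \<longrightarrow> z \<in> geod c \<inter> geod (l m) \<longrightarrow> w \<in> geod c \<inter> geod (l k)
            \<longrightarrow> pos c z < pos c w"
begin

lemma leaf_in_oleaves: "l m \<in> oleaves R" and leaf_crossed: "crosses_RL c (l m)"
  using leaves by auto

lemma crossed_leaf_index: "L \<in> oleaves R \<Longrightarrow> crosses_RL c L \<Longrightarrow> \<exists>k. l k = L"
  using leaves by (metis (mono_tags, lifting) mem_Collect_eq rangeE)

lemma leaf_meets_c: "\<exists>z. z \<in> geod c \<and> z \<in> geod (l m)"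
  using leaf_crossed[of m] by (intro crossing_geodesics_meet) (auto simp: crosses_RL_iff)

lemma head_left_of_leaf: "bleft (l m) (snd c)"
  using leaf_crossed[of m] by (simp add: crosses_RL_iff)

lemma pos_less: "m < k \<Longrightarrow> z \<in> geod c \<Longrightarrow> z \<in> geod (l m) \<Longrightarrow> w \<in> geod c \<Longrightarrow> w \<in> geod (l k) \<Longrightarrow> pos c z < pos c w"
  using ordered by blast

lemma leaf_Gamma_orbit: "\<exists>\<delta> \<in> Gamma R. l m = gact \<delta> e0"
  using oleaves_Gamma_orbit[OF adm leaf_in_oleaves] .

lemma leaf_index_inj: "l m = l k \<Longrightarrow> m = k"
  by (metis leaf_meets_c linorder_neqE less_irrefl pos_less)

lemma no_crossing_between_consecutive_leaves:
  assumes z: "z \<in> geod c" "z \<in> geod (l m)" and w: "w \<in> geod c" "w \<in> geod (l (m + 1))"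
    and s: "s \<in> geod c" "s \<in> geod (l k)" and "k \<noteq> m" "k \<noteq> m + 1"
    and "pos c z < pos c s" "pos c s < pos c w"
  shows False
proof -
  consider "k < m" | "m + 1 < k" using assms(7,8) by linarith
  then show False
  proof cases
    case 1 then show False using pos_less[OF 1 s z] assms(9) by simp
  next
    case 2 then show False using pos_less[OF 2 w s] assms(10) by simp
  qed
qed

lemma next_leaf_not_beyond_e0:
  assumes g: "\<gamma> \<in> Gamma R" and L0: "l m = gact \<gamma> e0" and L1: "l (m + 1) = gact \<gamma> g"
    and "beyond_e0 R g"
  shows False
proof -
  have dg: "det \<gamma> = 1" using Gamma_det[OF adm g] .
  obtain z w where z: "z \<in> geod c" "z \<in> geod (l m)" and w: "w \<in> geod c" "w \<in> geod (l (m + 1))"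
    using leaf_meets_c by blast
  have "bleft (prod.swap e0) (fst g)" "bleft (prod.swap e0) (snd g)"
    using beyond_ends[OF adm] assms(4) by (auto simp: both_ends_def)
  then have "bleft (prod.swap (l m)) (fst (l (m + 1)))" "bleft (prod.swap (l m)) (snd (l (m + 1)))"
    using dg by (simp_all add: L0 L1 fst_gact snd_gact gact_swap[symmetric] bleft_gact)
  then have "w \<in> lside (prod.swap (l m))" using geod_subset_lside w(2) by blast
  then have "pos c w < pos c z"
    using pos_monotone_across(2)[OF head_left_of_leaf z w(1)] by blast
  then show False using pos_less[of m "m + 1"] z w by fastforce
qed

lemma next_leaf_not_side:
  assumes g: "\<gamma> \<in> Gamma R" and L0: "l m = gact \<gamma> e0" and L1: "l (m + 1) = gact \<gamma> S"
    and S: "S \<in> {side1 R, side2 R}"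
  shows False
proof -
  have dg: "det \<gamma> = 1" using Gamma_det[OF adm g] .
  obtain t h where th: "S = (Fin t, Fin h)" "0 < t" "t < h" using admissible_side_shape[OF adm S] by blast
  \<comment> \<open>pulled back by gamma, the tail of c would lie both beyond e0 and inside the arc of S\<close>
  have "bleft (prod.swap e0) (bact (inv2 \<gamma>) (fst c))"
    using leaf_crossed[of m] dg by (simp add: crosses_RL_iff L0 gact_swap[symmetric] bleft_gact_iff)
  moreover have "bleft (prod.swap S) (bact (inv2 \<gamma>) (fst c))"
    using leaf_crossed[of "m + 1"] dg by (simp add: crosses_RL_iff L1 gact_swap[symmetric] bleft_gact_iff)
  then have "bleft e0 (bact (inv2 \<gamma>) (fst c))"
    using th by (auto simp: bleft_decreasing_iff bleft_e0_Fin)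
  ultimately show False using bleft_imp_not_bleft_swap by blast
qed

text \<open>If l (m+1) lies beyond the side gamma S of gamma Delta, then c also crosses the reversed
  leaf gamma S, and it would have to do so strictly between l m and l (m+1).\<close>
lemma next_leaf_not_beyond_side:
  assumes g: "\<gamma> \<in> Gamma R" and L0: "l m = gact \<gamma> e0" and L1: "l (m + 1) = gact \<gamma> g"
    and "beyond_side R g"
  shows False
proof -
  have dg: "det \<gamma> = 1" using Gamma_det[OF adm g] .
  obtain S where S: "S \<in> {side1 R, side2 R}" "both_ends (bleft (prod.swap S)) g"
    using beyond_ends[OF adm] assms(4) by blast
  obtain t h where th: "S = (Fin t, Fin h)" "0 < t" "t < h" using admissible_side_shape[OF adm S(1)] by blast
  define T where "T = gact \<gamma> S"
  obtain z w where z: "z \<in> geod c" "z \<in> geod (l m)" and w: "w \<in> geod c" "w \<in> geod (l (m + 1))"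
    using leaf_meets_c by blast
  have zw: "pos c z < pos c w" using pos_less[of m "m + 1"] z w by simp
  have "bleft (prod.swap T) (fst (l (m + 1)))" "bleft (prod.swap T) (snd (l (m + 1)))"
    using S(2) dg by (simp_all add: both_ends_def T_def L1 fst_gact snd_gact gact_swap[symmetric] bleft_gact)
  then have wT: "w \<in> lside (prod.swap T)" using geod_subset_lside w(2) by blast
  have "bleft T (fst (l m))" "bleft T (snd (l m))"
    using th dg by (simp_all add: T_def L0 fst_gact snd_gact bleft_gact bleft_increasing e0_def)
  then have zT: "z \<in> lside T" using geod_subset_lside z(2) by blast
  have "bleft (prod.swap T) (snd c)" by (rule head_right_of_geod_if_crossing_later[OF z(1) zT w(1) wT zw])
  moreover have "bleft T (fst c)"
  proof -
    have "bleft (prod.swap e0) (bact (inv2 \<gamma>) (fst c))"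
      using leaf_crossed[of m] dg by (simp add: crosses_RL_iff L0 gact_swap[symmetric] bleft_gact_iff)
    then show ?thesis
      using th dg by (simp add: T_def bleft_gact_iff bleft_increasing_if_left_of_swap_e0)
  qed
  ultimately have "crosses_RL c (prod.swap T)" by (simp add: crosses_RL_iff)
  moreover have "prod.swap T \<in> oleaves R" using g S(1) unfolding T_def oleaves_def by blast
  ultimately obtain k where k: "l k = prod.swap T" using crossed_leaf_index by blast
  obtain s where s: "s \<in> geod c" "s \<in> geod (l k)" using leaf_meets_c by blast
  have "bleft (l m) (fst T)" "bleft (l m) (snd T)"
    using th dg by (simp_all add: T_def L0 fst_gact snd_gact bleft_gact bleft_e0_Fin)
  moreover have "s \<in> geod T" using s(2) k geod_swap by metis
  ultimately have sL: "s \<in> lside (l m)" using geod_subset_lside by blast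
  have "k \<noteq> m" using sL s(2) geod_disjoint_lside by blast
  moreover have "k \<noteq> m + 1" using wT w(2) k geod_disjoint_lside by metis
  moreover have "pos c z < pos c s" using pos_monotone_across(1)[OF head_left_of_leaf z s(1) sL] .
  moreover have "pos c s < pos c w" using pos_monotone_across(1)[OF head_left_of_leaf s w(1)] wT k by simp
  ultimately show False using no_crossing_between_consecutive_leaves z w s by blast
qed

lemma next_leaf:
  assumes g: "\<gamma> \<in> Gamma R" and L0: "l m = gact \<gamma> e0"
  shows "\<exists>S \<in> {side1 R, side2 R}. l (m + 1) = gact \<gamma> (prod.swap S)"
proof -
  have dg: "det \<gamma> = 1" using Gamma_det[OF adm g] .
  obtain \<delta> where \<delta>: "\<delta> \<in> Gamma R" "l (m + 1) = gact \<delta> e0" using leaf_Gamma_orbit by blast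
  define g' where "g' = gact (inv2 \<gamma> ** \<delta>) e0"
  have L1: "l (m + 1) = gact \<gamma> g'"
    using dg Gamma_det[OF adm \<delta>(1)] unfolding g'_def \<delta>(2) by (simp add: gact_matrix_mult gact_inv2)
  have "well_placed R g'"
    unfolding g'_def by (rule well_placed_Gamma[OF adm Gamma_mult[OF Gamma_inv2[OF g] \<delta>(1)]])
  then consider "g' = e0" | "g' = prod.swap e0" | "g' \<in> {side1 R, side2 R}"
    | "g' \<in> prod.swap ` {side1 R, side2 R}" | "beyond_e0 R g'" | "beyond_side R g'"
    unfolding well_placed_def Delta_sides_def by blast
  then show ?thesis
  proof cases
    case 1
    then show ?thesis using L0 L1 leaf_index_inj[of "m + 1" m] by simp
  next
    case 2
    then have "l (m + 1) = prod.swap (l m)" using L0 L1 by (simp add: gact_swap)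
    then show ?thesis using leaf_crossed[of m] leaf_crossed[of "m + 1"] bleft_imp_not_bleft_swap
      by (metis crosses_RL_iff)
  next
    case 3
    then show ?thesis using next_leaf_not_side[OF g L0 L1] by blast
  next
    case 4
    then show ?thesis using L1 by blast
  next
    case 5
    then show ?thesis using next_leaf_not_beyond_e0[OF g L0 L1] by blast
  next
    case 6
    then show ?thesis using next_leaf_not_beyond_side[OF g L0 L1] by blast
  qed
qed

lemma second_next_leaf:
  assumes g: "\<gamma> \<in> Gamma R" and L0: "l k = gact \<gamma> e0"
  shows "\<exists>w \<in> Wset R. l (k + 2) = gact (\<gamma> ** w) e0"
proof -
  have step: "\<exists>M \<in> {R, R ** R}. l (j + 1) = gact (\<delta> ** (M ** Imat)) e0 \<and> \<delta> ** (M ** Imat) \<in> Gamma R"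
    if \<delta>: "\<delta> \<in> Gamma R" "l j = gact \<delta> e0" for \<delta> j
  proof -
    obtain S where S: "S \<in> {side1 R, side2 R}" "l (j + 1) = gact \<delta> (prod.swap S)"
      using next_leaf[OF \<delta>] by blast
    have "prod.swap (side1 R) = gact (R ** Imat) e0" "prod.swap (side2 R) = gact ((R ** R) ** Imat) e0"
      using det_R[OF adm] det_Imat by (simp_all add: side1_def side2_def gact_matrix_mult gact_Imat_e0 gact_swap)
    then obtain M where M: "M \<in> {R, R ** R}" "prod.swap S = gact (M ** Imat) e0" using S(1) by blast
    have "det (M ** Imat) = 1" using M(1) det_R[OF adm] det_Imat by (auto simp: det_mul)
    then have "l (j + 1) = gact (\<delta> ** (M ** Imat)) e0" using S(2) M(2) by (simp add: gact_matrix_mult)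
    moreover have "\<delta> ** (M ** Imat) \<in> Gamma R"
      using M(1) \<delta>(1) by (auto intro!: Gamma_mult R_in_Gamma Imat_in_Gamma)
    ultimately show ?thesis using M(1) by blast
  qed
  obtain Ma where Ma: "Ma \<in> {R, R ** R}" "l (k + 1) = gact (\<gamma> ** (Ma ** Imat)) e0" "\<gamma> ** (Ma ** Imat) \<in> Gamma R"
    using step[OF g L0] by blast
  obtain Mb where Mb: "Mb \<in> {R, R ** R}" "l (k + 1 + 1) = gact (\<gamma> ** (Ma ** Imat) ** (Mb ** Imat)) e0"
    using step[OF Ma(3,2)] by blast
  have "Ma ** Imat ** Mb ** Imat \<in> Wset R" using Ma(1) Mb(1) by (auto simp: Wset_def)
  moreover have "l (k + 2) = gact (\<gamma> ** (Ma ** Imat ** Mb ** Imat)) e0"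
    using Mb(2) by (simp add: matrix_mul_assoc add.assoc)
  ultimately show ?thesis by blast
qed

end

section \<open>The index-two subgroup\<close>

lemma Gamma_o_mult: "a \<in> Gamma_o R \<Longrightarrow> b \<in> Gamma_o R \<Longrightarrow> a ** b \<in> Gamma_o R"
  unfolding Gamma_o_def by (rule gen_group_mult)

lemma Gamma_o_inv2: "a \<in> Gamma_o R \<Longrightarrow> inv2 a \<in> Gamma_o R"
  unfolding Gamma_o_def by (rule gen_group_inv2) (auto intro: gen_group_generator)

lemma R_in_Gamma_o: "R \<in> Gamma_o R" and IRI_in_Gamma_o: "Imat ** R ** Imat \<in> Gamma_o R"
  unfolding Gamma_o_def by (auto intro: gen_group_generator)

lemma Gamma_o_subset_Gamma: "Gamma_o R \<subseteq> Gamma R"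
proof
  fix a assume "a \<in> Gamma_o R"
  then show "a \<in> Gamma R"
    unfolding Gamma_o_def
  proof induction
    case (step s M)
    have "Imat ** R ** Imat \<in> Gamma R" by (intro Gamma_mult R_in_Gamma Imat_in_Gamma)
    then have "s \<in> Gamma R" using step(1) by (auto intro: Gamma_inv2 R_in_Gamma)
    then show ?case using step(3) by (rule Gamma_mult)
  qed (simp add: Gamma_def gen_group.one)
qed

lemma Imat_conj_Imat: "Imat ** (Imat ** Y) = - Y" for Y :: "real^2^2"
  by (simp add: matrix_mul_assoc Imat_Imat matrix_mult_uminus)

text \<open>(I R I)^3 = - I R^3 I, and R^3 = \<plusminus>1, so -1 is R^3 or (I R I)^3.\<close>
lemma minus_one_in_Gamma_o:
  assumes "admissible_R R" shows "- mat 1 \<in> Gamma_o R"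
proof -
  define J where "J = Imat ** R ** Imat"
  have "J ** J ** J = Imat ** (R ** R ** R) ** Imat"
    by (simp add: J_def matrix_mul_assoc[symmetric] Imat_conj_Imat matrix_mult_uminus)
  moreover have "R ** R ** R \<in> Gamma_o R" "J ** J ** J \<in> Gamma_o R"
    unfolding J_def by (intro Gamma_o_mult R_in_Gamma_o IRI_in_Gamma_o)+
  ultimately show ?thesis
    using admissible_cube[OF assms] by (auto simp: Imat_Imat matrix_mult_uminus)
qed

lemma Gamma_o_uminus: "admissible_R R \<Longrightarrow> a \<in> Gamma_o R \<Longrightarrow> - a \<in> Gamma_o R"
  using Gamma_o_mult[OF minus_one_in_Gamma_o] by (simp add: matrix_mult_uminus)

lemma Wset_subset_Gamma_o:
  assumes adm: "admissible_R R" shows "Wset R \<subseteq> Gamma_o R"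
proof -
  define J K where "J = Imat ** R ** Imat" and "K = Imat ** (R ** R) ** Imat"
  have J: "J \<in> Gamma_o R" and RR: "R ** R \<in> Gamma_o R"
    unfolding J_def by (auto intro: Gamma_o_mult R_in_Gamma_o IRI_in_Gamma_o)
  have "K = - (J ** J)"
    by (simp add: J_def K_def matrix_mul_assoc[symmetric] Imat_conj_Imat matrix_mult_uminus)
  then have K: "K \<in> Gamma_o R" using J by (auto intro: Gamma_o_uminus[OF adm] Gamma_o_mult)
  have "Wset R = {R ** J, R ** K, (R ** R) ** K, (R ** R) ** J}"
    by (simp add: Wset_def J_def K_def matrix_mul_assoc)
  then show ?thesis using J K RR R_in_Gamma_o by (auto intro: Gamma_o_mult)
qed

lemma Gamma_orbit_e0_eq:
  assumes adm: "admissible_R R" and a: "a \<in> Gamma R" and b: "b \<in> Gamma R"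
    and eq: "gact a e0 = gact b e0"
  shows "b = a \<or> b = - a"
proof -
  have da: "det a = 1" and db: "det b = 1" using Gamma_det[OF adm] a b by blast+
  have "gact (inv2 a ** b) e0 = e0" using da db eq[symmetric] by (simp add: gact_matrix_mult gact_inv2')
  then have "inv2 a ** b = mat 1 \<or> inv2 a ** b = - mat 1"
    using Gamma_stabiliser_e0[OF adm Gamma_mult[OF Gamma_inv2[OF a] b]] by blast
  moreover have "b = a ** (inv2 a ** b)" using da by (simp add: matrix_mul_assoc matrix_mult_inv2)
  ultimately show ?thesis by (auto simp: matrix_mult_uminus)
qed

lemma Gamma_o_if_same_e0_image:
  "admissible_R R \<Longrightarrow> a \<in> Gamma R \<Longrightarrow> b \<in> Gamma_o R \<Longrightarrow> gact a e0 = gact b e0 \<Longrightarrow> a \<in> Gamma_o R"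
  using Gamma_orbit_e0_eq[of R b a] Gamma_o_subset_Gamma Gamma_o_uminus by fastforce

context crossing_sequence
begin

lemma even_leaf_Gamma_o_orbit:
  assumes "\<exists>g0 \<in> Gamma_o R. l 0 = gact g0 e0"
  shows "\<exists>g \<in> Gamma_o R. l (2 * n) = gact g e0"
proof (induction n rule: int_induct[where k = 0])
  case base
  then show ?case using assms by simp
next
  case (step1 i)
  then obtain g where g: "g \<in> Gamma_o R" "l (2 * i) = gact g e0" by blast
  obtain w where w: "w \<in> Wset R" "l (2 * i + 2) = gact (g ** w) e0"
    using second_next_leaf g Gamma_o_subset_Gamma by blast
  have "g ** w \<in> Gamma_o R" using g(1) w(1) Wset_subset_Gamma_o[OF adm] by (blast intro: Gamma_o_mult)
  then show ?case using w(2) by (auto simp: distrib_left)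
next
  case (step2 i)
  then obtain g where g: "g \<in> Gamma_o R" "l (2 * i) = gact g e0" by blast
  obtain \<delta> where \<delta>: "\<delta> \<in> Gamma R" "l (2 * (i - 1)) = gact \<delta> e0" using leaf_Gamma_orbit by blast
  obtain w where w: "w \<in> Wset R" "l (2 * i) = gact (\<delta> ** w) e0"
    using second_next_leaf[OF \<delta>] by (auto simp: algebra_simps)
  have wo: "w \<in> Gamma_o R" using w(1) Wset_subset_Gamma_o[OF adm] by blast
  have "\<delta> ** w \<in> Gamma_o R"
    using Gamma_o_if_same_e0_image[OF adm _ g(1)] \<delta>(1) wo Gamma_o_subset_Gamma g(2) w(2)
    by (metis Gamma_mult subsetD)
  then have "\<delta> ** w ** inv2 w \<in> Gamma_o R" by (rule Gamma_o_mult[OF _ Gamma_o_inv2[OF wo]])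
  moreover have "det w = 1" using Gamma_det[OF adm] wo Gamma_o_subset_Gamma by blast
  ultimately have "\<delta> \<in> Gamma_o R" by (simp add: matrix_mul_assoc[symmetric] matrix_mult_inv2)
  then show ?case using \<delta>(2) by auto
qed

end

theorem lemma9p1:
  fixes R :: "real^2^2" and c :: ogeod and l :: "int \<Rightarrow> ogeod"
  assumes "admissible_R R"
    and "fst c \<noteq> snd c"
    and "fst c \<in> limset (Gamma_o R)" and "snd c \<in> limset (Gamma_o R)"
    and "range l = {m \<in> oleaves R. crosses_RL c m}"
    and "\<forall>m k z w. m < k \<longrightarrow> z \<in> geod c \<inter> geod (l m) \<longrightarrow> w \<in> geod c \<inter> geod (l k)
            \<longrightarrow> pos c z < pos c w"
    and "\<exists>g0 \<in> Gamma_o R. l 0 = gact g0 e0"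
  shows "\<forall>n::int.
     (\<exists>g \<in> Gamma_o R. l (2 * n) = gact g e0)
   \<and> (\<forall>g \<in> Gamma_o R. \<forall>g' \<in> Gamma_o R. l (2 * n) = gact g e0 \<longrightarrow> l (2 * n) = gact g' e0
        \<longrightarrow> psl_eq g g')
   \<and> (\<forall>g \<in> Gamma_o R. \<forall>g' \<in> Gamma_o R. l (2 * n) = gact g e0 \<longrightarrow> l (2 * n + 2) = gact g' e0
        \<longrightarrow> (\<exists>w \<in> Wset R. psl_eq g' (g ** w)))"
proof -
  interpret crossing_sequence R c l using assms(1,5,6) by unfold_locales
  have psl_eq_if_same_e0_image: "psl_eq a b"
    if "a \<in> Gamma_o R" "b \<in> Gamma_o R" "gact a e0 = gact b e0" for a b
    using Gamma_orbit_e0_eq[OF adm] that Gamma_o_subset_Gamma by (fastforce simp: psl_eq_def)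
  have "\<exists>w \<in> Wset R. psl_eq g' (g ** w)"
    if g: "g \<in> Gamma_o R" "g' \<in> Gamma_o R" and L: "l (2 * n) = gact g e0" "l (2 * n + 2) = gact g' e0"
    for n g g'
  proof -
    obtain w where w: "w \<in> Wset R" "l (2 * n + 2) = gact (g ** w) e0"
      using second_next_leaf g(1) L(1) Gamma_o_subset_Gamma by blast
    have "g ** w \<in> Gamma_o R" using g(1) w(1) Wset_subset_Gamma_o[OF adm] by (blast intro: Gamma_o_mult)
    then show ?thesis using psl_eq_if_same_e0_image[OF g(2)] L(2) w by metis
  qed
  then show ?thesis
    using even_leaf_Gamma_o_orbit[OF assms(7)] psl_eq_if_same_e0_image by metis
qed

end
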